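(* Suppose the embedded jump chain $(\tilde\xi_n)$ is recurrent. (1) The following are equivalent: (i) there exist $f\in\mathrm{Dom}_+(\Gamma)$ with $\sup_{x\in\mathbb X}f(x)=b<\infty$, a number $a\in(0,b)$ such that $\{f\le a\}$ is finite, and $\epsilon>0$ such that $\Gamma f(x)\le-\epsilon$ for all $x\notin\{f\le a\}$; (ii) for every nonempty finite $A\subset\mathbb X$ there exists a constant $C_A>0$ such that $\mathbb E_x\tau_A\le C_A$ for all $x\notin A$. (2) Let $f\in\mathrm{Dom}_+(\Gamma)$ with $f\to\infty$, and suppose there exist constants $a>0$, $c>0$, $\epsilon>0$ and $r>1$ such that $f^r\in\mathrm{Dom}_+(\Gamma)$, $\Gamma f(x)\ge-\epsilon$ for all $x\notin\{f\le a\}$, and $\Gamma f^r(x)\le c\,f^{r-1}(x)$ for all $x\notin\{f\le a\}$. Then the chain does not implode towards $\{f\le a\}$, i.e.\ there is no $K>0$ with $\mathbb E_x\tau_{\{f\le a\}}\le K$ for all $x\notin\{f\le a\}$.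
   Context: Let $\mathbb X$ be a countably infinite set and $\Gamma=(\Gamma_{xy})_{x,y\in\mathbb X}$ a matrix with $\Gamma_{xy}\ge0$ for $y\ne x$, $\gamma_x:=\sum_{y\ne x}\Gamma_{xy}$, $\Gamma_{xx}=-\gamma_x$, and $0<\gamma_x<\infty$ for all $x$. Let $P_{xy}=\Gamma_{xy}/\gamma_x$ for $y\neq x$ and $P_{xx}=0$; the discrete-time chain $(\tilde\xi_n)$ with transition matrix $P$ (embedded jump chain) is assumed irreducible. The continuous-time Markov chain $(\xi_t)_{t\ge0}$ with generator $\Gamma$: conditionally on $\tilde\xi$, holding times $\sigma_n$ ($n\ge1$) are independent exponential with parameter $\gamma_{\tilde\xi_{n-1}}$; $J_0=0$, $J_n=\sigma_1+\dots+\sigma_n$, $\zeta=\lim_nJ_n$; $\xi_t=\tilde\xi_n$ on $[J_n,J_{n+1})$, $\xi_t=\partial$ for $t\ge\zeta$. $\mathbb E_x$ refers to $\xi_0=x$; $\tau_A=\inf\{t\ge0:\xi_t\in A\}$. $\mathrm{Dom}(\Gamma)=\{f:\mathbb X\to\mathbb R:\ \sum_{y\ne x}\Gamma_{xy}|f(y)|<\infty\ \forall x\}$, $\mathrm{Dom}_+(\Gamma)$ its non-negative elements, $\Gamma f(x)=\sum_{y}\Gamma_{xy}f(y)$. $\{f\le\alpha\}:=\{x:f(x)\le\alpha\}$; "$f\to\infty$" means $\{f\le n\}$ is finite for all $n\in\mathbb N$. The chain implodes towards a proper subset $A$ if there is $K>0$ with $\mathbb E_x\tau_A\le K$ for all $x\in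 A^c$. *)

theory Defs
  imports "HOL-Probability.Probability"
begin

definition gam :: "('a \<Rightarrow> 'a \<Rightarrow> real) \<Rightarrow> 'a \<Rightarrow> real" where
  "gam G x = (\<Sum>\<^sub>\<infinity> y\<in>-{x}. G x y)"

definition is_generator :: "('a \<Rightarrow> 'a \<Rightarrow> real) \<Rightarrow> bool" where
  "is_generator G \<longleftrightarrow>
     (\<forall>x y. y \<noteq> x \<longrightarrow> 0 \<le> G x y) \<and>
     (\<forall>x. G x summable_on (-{x})) \<and>
     (\<forall>x. 0 < gam G x) \<and>
     (\<forall>x. G x x = - gam G x)"

definition jumpP :: "('a \<Rightarrow> 'a \<Rightarrow> real) \<Rightarrow> 'a \<Rightarrow> 'a \<Rightarrow> real" where
  "jumpP G x y = (if y = x then 0 else G x y / gam G x)"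

definition jump_irreducible :: "('a \<Rightarrow> 'a \<Rightarrow> real) \<Rightarrow> bool" where
  "jump_irreducible G \<longleftrightarrow> (\<forall>x y. (\<lambda>u v. 0 < jumpP G u v)\<^sup>*\<^sup>* x y)"

definition in_Dom :: "('a \<Rightarrow> 'a \<Rightarrow> real) \<Rightarrow> ('a \<Rightarrow> real) \<Rightarrow> bool" where
  "in_Dom G f \<longleftrightarrow> (\<forall>x. (\<lambda>y. G x y * \<bar>f y\<bar>) summable_on (-{x}))"

definition in_Dom_plus :: "('a \<Rightarrow> 'a \<Rightarrow> real) \<Rightarrow> ('a \<Rightarrow> real) \<Rightarrow> bool" where
  "in_Dom_plus G f \<longleftrightarrow> in_Dom G f \<and> (\<forall>x. 0 \<le> f x)"

definition gen_apply :: "('a \<Rightarrow> 'a \<Rightarrow> real) \<Rightarrow> ('a \<Rightarrow> real) \<Rightarrow> 'a \<Rightarrow> real" where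
  "gen_apply G f x = G x x * f x + (\<Sum>\<^sub>\<infinity> y\<in>-{x}. G x y * f y)"

text \<open>The underlying probability space is an
  i.i.d. sequence of pairs of independent uniform random variables on (0,1): the first
  component selects the next state of the jump chain (inverse-CDF along a fixed
  enumeration of the state space), the second produces the Exp(1) variable -ln U, which
  divided by the current rate gives the holding time.\<close>

definition unif01 :: "real measure" where
  "unif01 = uniform_measure lborel {0<..<1}"

definition Omega :: "(real \<times> real) stream measure" where
  "Omega = stream_space (unif01 \<Otimes>\<^sub>M unif01)"

definition enum_state :: "nat \<Rightarrow> 'a::countable" where
  "enum_state = from_nat_into (UNIV :: 'a set)"

definition next_state :: "('a::countable \<Rightarrow> 'a \<Rightarrow> real) \<Rightarrow> 'a \<Rightarrow> real \<Rightarrow> 'a" where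
  "next_state G x u =
     enum_state (LEAST k. u < (\<Sum>j\<le>k. jumpP G x (enum_state j)))"

primrec jump_chain :: "('a::countable \<Rightarrow> 'a \<Rightarrow> real) \<Rightarrow> 'a \<Rightarrow> (real \<times> real) stream \<Rightarrow> nat \<Rightarrow> 'a" where
  "jump_chain G x \<omega> 0 = x"
| "jump_chain G x \<omega> (Suc n) = next_state G (jump_chain G x \<omega> n) (fst (\<omega> !! n))"

text \<open>holding_time G x w n is sigma_(n+1), with parameter gamma of the n-th state.\<close>
definition holding_time :: "('a::countable \<Rightarrow> 'a \<Rightarrow> real) \<Rightarrow> 'a \<Rightarrow> (real \<times> real) stream \<Rightarrow> nat \<Rightarrow> real" where
  "holding_time G x \<omega> n = - ln (snd (\<omega> !! n)) / gam G (jump_chain G x \<omega> n)"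

definition jump_time :: "('a::countable \<Rightarrow> 'a \<Rightarrow> real) \<Rightarrow> 'a \<Rightarrow> (real \<times> real) stream \<Rightarrow> nat \<Rightarrow> real" where
  "jump_time G x \<omega> n = (\<Sum>k<n. holding_time G x \<omega> k)"

text \<open>Continuous-time chain; None plays the role of the cemetery state after explosion.\<close>
definition ctmc :: "('a::countable \<Rightarrow> 'a \<Rightarrow> real) \<Rightarrow> 'a \<Rightarrow> (real \<times> real) stream \<Rightarrow> real \<Rightarrow> 'a option" where
  "ctmc G x \<omega> t =
     (if \<exists>n. jump_time G x \<omega> n \<le> t \<and> t < jump_time G x \<omega> (Suc n)
      then Some (jump_chain G x \<omega> (THE n. jump_time G x \<omega> n \<le> t \<and> t < jump_time G x \<omega> (Suc n)))
      else None)"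

text \<open>Hitting time of A (value infinity if A is never hit).\<close>
definition hitting_time :: "('a::countable \<Rightarrow> 'a \<Rightarrow> real) \<Rightarrow> 'a set \<Rightarrow> 'a \<Rightarrow> (real \<times> real) stream \<Rightarrow> ennreal" where
  "hitting_time G A x \<omega> =
     (INF t \<in> {t. 0 \<le> t \<and> (\<exists>y\<in>A. ctmc G x \<omega> t = Some y)}. ennreal t)"

definition exp_hitting_time :: "('a::countable \<Rightarrow> 'a \<Rightarrow> real) \<Rightarrow> 'a set \<Rightarrow> 'a \<Rightarrow> ennreal" where
  "exp_hitting_time G A x = (\<integral>\<^sup>+ \<omega>. hitting_time G A x \<omega> \<partial>Omega)"

definition jump_recurrent :: "('a::countable \<Rightarrow> 'a \<Rightarrow> real) \<Rightarrow> bool" where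
  "jump_recurrent G \<longleftrightarrow>
     (\<forall>x. emeasure Omega {\<omega> \<in> space Omega. \<exists>n>0. jump_chain G x \<omega> n = x} = 1)"

end

theory Submission
  imports Defs "HOL-Real_Asymp.Real_Asymp"
begin

text \<open>
  (1) Given (ii), fix a state x0 and let h x = E_x tau_{x0}. First-step analysis gives
  gen_apply G h = -1 off x0, so f = [x \<noteq> x0] + h is bounded with drift \<le> -1 off
  {f \<le> 1/2} \<subseteq> {x0}. Conversely, Foster's criterion says that a nonnegative V in the domain
  with drift \<le> -1 off A bounds E_x tau_A by V x, recurrence and irreducibility ensuring that
  A is hit almost surely. Given (i), take V = f / \<epsilon> + L * T, where T z is the expected number
  of jumps from z before visiting A, truncated at m. Off A the drift of T is
  -gam G z * P_z(A is visited within m jumps), which by irreducibility is strictly negative on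
  the finite set {f \<le> a} - A, where f alone has no useful drift; a large L compensates there.

  (2) Stop the chain when it enters B = {f \<le> a} or when f exceeds M. Up to the stopping time
  f decreases at rate at most \<epsilon> and f^r increases at rate at most c M^(r-1), so
  f x \<le> E f(X) + \<epsilon> E T and E f(X)^r \<le> f(x)^r + c M^(r-1) E T. If E_x tau_B \<le> K, then
  E T \<le> K and the event that X is not yet in B has vanishing probability, whence
  f x \<le> a + f(x)^r / M^(r-1) + (c + \<epsilon>) K + 1. Choosing M^(r-1) \<ge> f(x)^r for a state
  with f x > a + (c + \<epsilon>) K + 2, which exists since f tends to infinity, is contradictory.
\<close>

lemma nn_integral_minus_ln_unit_interval:
  "(\<integral>\<^sup>+(v::real). ennreal (- ln v) * indicator {0<..<1} v \<partial>lborel) = 1"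
proof -
  have deriv: "\<And>x. 0 < ereal x \<Longrightarrow> ereal x < 1 \<Longrightarrow> DERIV (\<lambda>v. v - v * ln v) x :> - ln x"
    by (auto intro!: derivative_eq_intros)
  have cont: "\<And>x. 0 < ereal x \<Longrightarrow> ereal x < 1 \<Longrightarrow> isCont (\<lambda>v. - ln v) x"
    by (auto intro!: continuous_intros)
  have nonneg: "AE x in lborel. 0 < ereal x \<longrightarrow> ereal x < 1 \<longrightarrow> 0 \<le> - ln x" by auto
  have lim0: "(((\<lambda>v. v - v * ln v) \<circ> real_of_ereal) \<longlongrightarrow> 0) (at_right 0)"
    unfolding zero_ereal_def ereal_tendsto_simps by real_asymp
  have lim1: "(((\<lambda>v. v - v * ln v) \<circ> real_of_ereal) \<longlongrightarrow> 1) (at_left 1)"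
    unfolding one_ereal_def ereal_tendsto_simps by real_asymp
  note FTC = interval_integral_FTC_nonneg[of 0 1, OF _ deriv cont nonneg lim0 lim1]
  have integrable: "set_integrable lborel {0<..<1} (\<lambda>v::real. - ln v)"
    using FTC(1) by (simp add: zero_ereal_def one_ereal_def)
  have integral: "(LINT v:{0<..<1}|lborel. - ln (v::real)) = 1"
    using FTC(2) by (simp add: interval_lebesgue_integral_def zero_ereal_def one_ereal_def)
  have "(\<integral>\<^sup>+v. ennreal (- ln v) * indicator {0<..<1} v \<partial>lborel)
      = (\<integral>\<^sup>+v. ennreal (indicator {0<..<1} v *\<^sub>R (- ln v)) \<partial>lborel)"
    by (intro nn_integral_cong) (auto split: split_indicator)
  also have "\<dots> = ennreal (LINT v:{0<..<1}|lborel. - ln v)"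
    unfolding set_lebesgue_integral_def
    using integrable unfolding set_integrable_def
    by (intro nn_integral_eq_integral) (auto split: split_indicator)
  finally show ?thesis using integral by simp
qed

lemma emeasure_lborel_Ioo_Int_Ico:
  fixes lo hi :: real
  assumes "0 \<le> lo" "lo \<le> hi" "hi \<le> 1"
  shows "emeasure lborel ({0<..<1} \<inter> {lo..<hi}) = ennreal (hi - lo)"
proof (rule antisym)
  have "{0<..<1} \<inter> {lo..<hi} \<subseteq> {lo..hi}" by auto
  then show "emeasure lborel ({0<..<1} \<inter> {lo..<hi}) \<le> ennreal (hi - lo)"
    using emeasure_mono[of "{0<..<1} \<inter> {lo..<hi}" "{lo..hi}" lborel] assms by simp
  have "{lo<..<hi} \<subseteq> {0<..<1} \<inter> {lo..<hi}" using assms by auto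
  then show "ennreal (hi - lo) \<le> emeasure lborel ({0<..<1} \<inter> {lo..<hi})"
    using emeasure_mono[of "{lo<..<hi}" "{0<..<1} \<inter> {lo..<hi}" lborel] assms by simp
qed

lemma nn_integral_count_space_eq_infsum:
  fixes h :: "'b \<Rightarrow> real"
  assumes "\<And>y. y \<in> S \<Longrightarrow> 0 \<le> h y" "h summable_on S"
  shows "(\<integral>\<^sup>+y. ennreal (h y) \<partial>count_space S) = ennreal (infsum h S)"
proof -
  have "Infinite_Sum.abs_summable_on h S"
    using assms(2) summable_on_iff_abs_summable_on_real by blast
  then have abs: "Infinite_Set_Sum.abs_summable_on h S"
    using abs_summable_equivalent by blast
  show ?thesis
    using nn_integral_conv_infsetsum[OF abs] infsetsum_infsum[OF abs] assms(1) by simp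
qed

lemma summable_on_divide_const:
  fixes f :: "'b \<Rightarrow> real"
  shows "f summable_on A \<Longrightarrow> (\<lambda>x. f x / c) summable_on A"
  by (simp add: divide_inverse summable_on_cmult_left)

lemma infsum_divide_const:
  fixes f :: "'b \<Rightarrow> real"
  shows "infsum (\<lambda>x. f x / c) A = infsum f A / c"
  by (simp add: divide_inverse infsum_cmult_left')

lemma infsum_diff:
  fixes f g :: "'b \<Rightarrow> 'c::{topological_ab_group_add, t2_space}"
  assumes f: "f summable_on S" and g: "g summable_on S"
  shows "infsum (\<lambda>x. f x - g x) S = infsum f S - infsum g S"
proof -
  have neg: "(\<lambda>x. - g x) summable_on S" using g by (simp add: summable_on_uminus)
  show ?thesis using infsum_add[OF f neg] infsum_uminus[of g S] by simp
qed

lemma summable_on_sum: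
  fixes f :: "'i \<Rightarrow> 'b \<Rightarrow> 'c::topological_comm_monoid_add"
  assumes "finite I" "\<And>i. i \<in> I \<Longrightarrow> f i summable_on S"
  shows "(\<lambda>x. \<Sum>i\<in>I. f i x) summable_on S"
  using assms by (induction I rule: finite_induct) (auto intro!: summable_on_add)

lemma infsum_sum:
  fixes f :: "'i \<Rightarrow> 'b \<Rightarrow> 'c::{topological_comm_monoid_add, t2_space}"
  assumes "finite I" "\<And>i. i \<in> I \<Longrightarrow> f i summable_on S"
  shows "infsum (\<lambda>x. \<Sum>i\<in>I. f i x) S = (\<Sum>i\<in>I. infsum (f i) S)"
  using assms by (induction I rule: finite_induct) (auto simp: infsum_add summable_on_sum)

lemma SUP_Suc_incseq:
  fixes f :: "nat \<Rightarrow> 'b::complete_lattice"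
  assumes "incseq f"
  shows "(SUP n. f (Suc n)) = (SUP n. f n)"
proof (rule antisym)
  show "(SUP n. f (Suc n)) \<le> (SUP n. f n)"
    by (rule SUP_least) (rule SUP_upper, simp)
  show "(SUP n. f n) \<le> (SUP n. f (Suc n))"
    using assms by (intro SUP_least) (auto intro: SUP_upper2 simp: incseq_Suc_iff)
qed

lemma le_split_powr:
  fixes t a M r :: real
  assumes "0 \<le> t" "0 \<le> a" "1 \<le> M" "1 < r"
  shows "t \<le> a + t powr r / M powr (r - 1) + M * indicator {a<..M} t"
proof (cases "M < t")
  case True
  have "M powr (r - 1) \<le> t powr (r - 1)" using assms True by (intro powr_mono2) auto
  then have "t * M powr (r - 1) \<le> t * t powr (r - 1)" using assms by (intro mult_left_mono) auto
  also have "\<dots> = t powr r" using assms True by (simp add: powr_mult_base)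
  finally have "t \<le> t powr r / M powr (r - 1)" using assms by (simp add: field_simps)
  then show ?thesis using assms True by (simp split: split_indicator)
next
  case False
  have "0 \<le> t powr r / M powr (r - 1)" "0 \<le> M * indicator {a<..M} t" using assms by simp_all
  moreover have "M * indicator {a<..M} t = M" if "a < t" using that False by simp
  ultimately show ?thesis using assms False by (cases "a < t") linarith+
qed

lemma finite_bounded_by_positive_multiple:
  fixes c q :: "'b \<Rightarrow> real"
  assumes "finite F" "\<And>z. z \<in> F \<Longrightarrow> 0 < q z"
  shows "\<exists>L\<ge>0. \<forall>z\<in>F. c z \<le> L * q z"
proof (intro exI conjI ballI)
  define L where "L = (\<Sum>z\<in>F. \<bar>c z\<bar> / q z)"
  show "0 \<le> L" unfolding L_def using assms(2) by (intro sum_nonneg) (auto intro!: divide_nonneg_pos)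
  fix z assume z: "z \<in> F"
  have "\<bar>c z\<bar> / q z \<le> L"
    unfolding L_def using assms z by (intro member_le_sum) (auto intro!: divide_nonneg_pos)
  then show "c z \<le> L * q z" using assms(2)[OF z] by (simp add: pos_divide_le_eq)
qed

lemma finite_sublevels_unbounded:
  fixes f :: "'b \<Rightarrow> real"
  assumes "infinite (UNIV :: 'b set)" "\<forall>n::nat. finite {x. f x \<le> real n}"
  obtains x where "R < f x"
proof -
  have "\<not> UNIV \<subseteq> {x. f x \<le> real (nat \<lceil>R\<rceil>)}"
    using assms finite_subset by blast
  then obtain x where "\<not> f x \<le> real (nat \<lceil>R\<rceil>)" by blast
  then show ?thesis using that[of x] by linarith
qed

section \<open>The generator and its jump kernel\<close>

locale generator =
  fixes G :: "'a::countable \<Rightarrow> 'a \<Rightarrow> real"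
  assumes is_generator: "is_generator G"
begin

lemma gam_pos: "0 < gam G x"
  using is_generator by (simp add: is_generator_def)

lemma G_nonneg: "y \<noteq> x \<Longrightarrow> 0 \<le> G x y"
  using is_generator by (simp add: is_generator_def)

lemma G_summable: "G x summable_on -{x}"
  using is_generator by (simp add: is_generator_def)

lemma G_diag: "G x x = - gam G x"
  using is_generator by (simp add: is_generator_def)

lemma jumpP_nonneg: "0 \<le> jumpP G x y"
  unfolding jumpP_def using G_nonneg gam_pos by (auto intro!: divide_nonneg_pos)

lemma jumpP_diag [simp]: "jumpP G x x = 0"
  by (simp add: jumpP_def)

abbreviation off_diag_sum :: "'a \<Rightarrow> ('a \<Rightarrow> real) \<Rightarrow> real" where
  "off_diag_sum x h \<equiv> \<Sum>\<^sub>\<infinity>y\<in>-{x}. G x y * h y"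

abbreviation jump_expect :: "'a \<Rightarrow> ('a \<Rightarrow> ennreal) \<Rightarrow> ennreal" where
  "jump_expect x \<phi> \<equiv> \<integral>\<^sup>+y. ennreal (jumpP G x y) * \<phi> y \<partial>count_space UNIV"

lemma gen_apply_eq: "gen_apply G f x = off_diag_sum x f - gam G x * f x"
  by (simp add: gen_apply_def G_diag)

lemma off_diag_sum_1: "off_diag_sum x (\<lambda>_. 1) = gam G x"
  by (simp add: gam_def)

lemma off_diag_sum_nonneg: "(\<And>y. 0 \<le> h y) \<Longrightarrow> 0 \<le> off_diag_sum x h"
  using G_nonneg by (intro infsum_nonneg mult_nonneg_nonneg) auto

lemma summable_on_off_diag_bounded:
  assumes "\<And>y. 0 \<le> h y" "\<And>y. h y \<le> c"
  shows "(\<lambda>y. G x y * h y) summable_on -{x}"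
proof (rule summable_on_comparison_test[where f="\<lambda>y. G x y * c"])
  show "(\<lambda>y. G x y * c) summable_on -{x}" by (rule summable_on_cmult_left[OF G_summable])
  fix y assume "y \<in> -{x}"
  then have "0 \<le> G x y" using G_nonneg by auto
  then show "G x y * h y \<le> G x y * c" "0 \<le> G x y * h y"
    using assms by (auto intro: mult_left_mono)
qed

lemma off_diag_sum_mono:
  assumes "(\<lambda>y. G x y * g y) summable_on -{x}" "(\<lambda>y. G x y * h y) summable_on -{x}"
    and "\<And>y. g y \<le> h y"
  shows "off_diag_sum x g \<le> off_diag_sum x h"
  using assms G_nonneg by (intro infsum_mono mult_left_mono) auto

lemma in_Dom_plus_summable:
  assumes "in_Dom_plus G f"
  shows "(\<lambda>y. G x y * f y) summable_on -{x}"
proof -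
  from assms have "\<forall>x. (\<lambda>y. G x y * \<bar>f y\<bar>) summable_on -{x}" "\<forall>y. 0 \<le> f y"
    unfolding in_Dom_plus_def in_Dom_def by auto
  then show ?thesis by (simp add: abs_of_nonneg)
qed

lemma in_Dom_plus_lincomb:
  assumes f: "in_Dom_plus G f" and g: "\<And>y. 0 \<le> g y" "\<And>y. g y \<le> c" and "0 \<le> a" "0 \<le> b"
  shows "in_Dom_plus G (\<lambda>y. a * f y + b * g y)"
proof -
  have "(\<lambda>y. G x y * (a * f y + b * g y)) = (\<lambda>y. a * (G x y * f y) + b * (G x y * g y))" for x
    by (simp add: algebra_simps)
  then have "(\<lambda>y. G x y * (a * f y + b * g y)) summable_on -{x}" for x
    by (simp only:) (intro summable_on_add summable_on_cmult_right in_Dom_plus_summable[OF f]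
        summable_on_off_diag_bounded[OF g])
  moreover have "0 \<le> a * f y + b * g y" for y
    using f g \<open>0 \<le> a\<close> \<open>0 \<le> b\<close> by (simp add: in_Dom_plus_def)
  ultimately show ?thesis by (simp add: in_Dom_plus_def in_Dom_def)
qed

lemma gen_apply_linear:
  assumes "(\<lambda>y. G x y * f y) summable_on -{x}" "(\<lambda>y. G x y * g y) summable_on -{x}"
  shows "gen_apply G (\<lambda>y. a * f y + b * g y) x = a * gen_apply G f x + b * gen_apply G g x"
proof -
  have "off_diag_sum x (\<lambda>y. a * f y + b * g y) = a * off_diag_sum x f + b * off_diag_sum x g"
    using infsum_add[OF summable_on_cmult_right[OF assms(1), of a] summable_on_cmult_right[OF assms(2), of b]]
    by (simp add: algebra_simps infsum_cmult_right')
  then show ?thesis by (simp add: gen_apply_eq algebra_simps)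
qed

lemma gen_apply_indicator_nonpos:
  assumes "x \<notin> A"
  shows "gen_apply G (\<lambda>y. if y \<in> A then 0 else 1) x \<le> 0"
proof -
  have "off_diag_sum x (\<lambda>y. if y \<in> A then 0 else 1) \<le> off_diag_sum x (\<lambda>_. 1)"
    by (intro off_diag_sum_mono summable_on_off_diag_bounded[where c=1]) auto
  then show ?thesis using assms off_diag_sum_1[of x] by (simp add: gen_apply_eq)
qed

lemma jump_expect_ennreal:
  fixes g :: "'a \<Rightarrow> real"
  assumes g: "\<And>y. 0 \<le> g y" and summable: "(\<lambda>y. G x y * g y) summable_on -{x}"
  shows "jump_expect x (\<lambda>y. ennreal (g y)) = ennreal (off_diag_sum x g / gam G x)"
proof -
  have "jump_expect x (\<lambda>y. ennreal (g y))
      = (\<integral>\<^sup>+y. ennreal (G x y * g y / gam G x) * indicator (-{x}) y \<partial>count_space UNIV)"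
  proof (intro nn_integral_cong)
    fix y
    have "y \<noteq> x \<Longrightarrow> ennreal (G x y / gam G x) * ennreal (g y) = ennreal (G x y * g y / gam G x)"
      using G_nonneg[of y x] gam_pos[of x]
      by (subst ennreal_mult'[symmetric]) (auto intro!: divide_nonneg_pos)
    then show "ennreal (jumpP G x y) * ennreal (g y)
        = ennreal (G x y * g y / gam G x) * indicator (-{x}) y"
      by (auto simp: jumpP_def split: split_indicator)
  qed
  also have "\<dots> = ennreal (\<Sum>\<^sub>\<infinity>y\<in>-{x}. G x y * g y / gam G x)"
    using gam_pos G_nonneg g summable
    by (subst nn_integral_count_space_indicator[symmetric], simp)
       (intro nn_integral_count_space_eq_infsum summable_on_divide_const;
        auto intro!: divide_nonneg_pos)
  finally show ?thesis by (simp add: infsum_divide_const)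
qed

lemma jump_expect_1: "jump_expect x (\<lambda>_. 1) = 1"
  using jump_expect_ennreal[of "\<lambda>_. 1" x] G_summable gam_pos[of x] by (simp add: gam_def)

lemma jump_expect_eq_1_D:
  assumes avg: "jump_expect x \<phi> = 1" and le: "\<And>y. \<phi> y \<le> 1" and pos: "0 < jumpP G x y"
  shows "\<phi> y = 1"
proof -
  have "jump_expect x \<phi> + jump_expect x (\<lambda>y. 1 - \<phi> y)
      = jump_expect x (\<lambda>y. \<phi> y + (1 - \<phi> y))"
    by (simp add: nn_integral_add distrib_left)
  also have "\<dots> = jump_expect x (\<lambda>_. 1)"
    using le by (intro nn_integral_cong) (simp add: add_diff_inverse_ennreal)
  finally have "1 + jump_expect x (\<lambda>y. 1 - \<phi> y) = 1 + 0"
    using avg jump_expect_1[of x] by simp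
  then have "jump_expect x (\<lambda>y. 1 - \<phi> y) = 0"
    using ennreal_add_left_cancel by fastforce
  then have "ennreal (jumpP G x y) * (1 - \<phi> y) = 0"
    by (subst (asm) nn_integral_0_iff_AE) (auto simp: AE_count_space)
  then have "1 - \<phi> y = 0" using pos by simp
  then show ?thesis using le[of y] ennreal_minus_eq_0 by (metis antisym)
qed

end

section \<open>Sampling the jump chain\<close>

lemma prob_space_unif01: "prob_space unif01"
  unfolding unif01_def by (intro prob_space_uniform_measure) auto

lemma sets_unif01 [measurable_cong]: "sets unif01 = sets borel"
  unfolding unif01_def by simp

lemma space_unif01 [simp]: "space unif01 = UNIV"
  unfolding unif01_def by simp

lemma emeasure_unif01:
  "A \<in> sets borel \<Longrightarrow> emeasure unif01 A = emeasure lborel ({0<..<1} \<inter> A)"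
  unfolding unif01_def by (subst emeasure_uniform_measure) (auto simp: Int_commute divide_ennreal_def)

lemma prob_space_unif01_pair: "prob_space (unif01 \<Otimes>\<^sub>M unif01)"
  by (intro prob_space_pair prob_space_unif01)

lemma prob_space_Omega: "prob_space Omega"
  unfolding Omega_def by (rule prob_space.prob_space_stream_space[OF prob_space_unif01_pair])

lemma space_Omega [simp]: "space Omega = UNIV"
  unfolding Omega_def by (simp add: space_stream_space space_pair_measure)

lemma emeasure_Omega_UNIV [simp]: "emeasure Omega UNIV = 1"
  using prob_space.emeasure_space_1[OF prob_space_Omega] by simp

lemma measurable_stl_Omega [measurable]: "stl \<in> Omega \<rightarrow>\<^sub>M Omega"
  unfolding Omega_def by (rule measurable_stl)

locale chain = generator G for G :: "'a::countable \<Rightarrow> 'a \<Rightarrow> real" +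
  assumes infinite_states: "infinite (UNIV :: 'a set)"
begin

lemma bij_enum_state: "bij (enum_state :: nat \<Rightarrow> 'a)"
  unfolding enum_state_def using bij_betw_from_nat_into[OF _ infinite_states] by simp

definition jump_cdf :: "'a \<Rightarrow> nat \<Rightarrow> real" where
  "jump_cdf x k = (\<Sum>j\<le>k. jumpP G x (enum_state j))"

lemma summable_on_jumpP: "jumpP G x summable_on UNIV"
proof -
  have "jumpP G x summable_on -{x}"
    using summable_on_divide_const[OF G_summable[of x], of "gam G x"]
    by (rule summable_on_cong[THEN iffD1, rotated]) (auto simp: jumpP_def)
  then have "jumpP G x summable_on (-{x} \<union> {x})"
    by (intro summable_on_Un_disjoint) auto
  then show ?thesis by (simp add: Un_commute)
qed

lemma sums_jumpP: "(\<lambda>j. jumpP G x (enum_state j)) sums 1"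
proof -
  have "ennreal (infsum (jumpP G x) UNIV) = jump_expect x (\<lambda>_. 1)"
    by (simp add: nn_integral_count_space_eq_infsum jumpP_nonneg summable_on_jumpP)
  then have "infsum (jumpP G x) UNIV = 1"
    using jump_expect_1[of x] by (simp add: infsum_nonneg jumpP_nonneg)
  then have "(jumpP G x has_sum 1) UNIV"
    using summable_on_jumpP by (metis has_sum_infsum)
  then have "((\<lambda>j. jumpP G x (enum_state j)) has_sum 1) UNIV"
    using has_sum_reindex_bij_betw[of enum_state UNIV UNIV "jumpP G x" 1] bij_enum_state by auto
  then show ?thesis by (rule has_sum_imp_sums)
qed

lemma jump_cdf_mono: "j \<le> k \<Longrightarrow> jump_cdf x j \<le> jump_cdf x k"
  unfolding jump_cdf_def by (intro sum_mono2) (auto simp: jumpP_nonneg)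

lemma jump_cdf_nonneg: "0 \<le> jump_cdf x k"
  unfolding jump_cdf_def by (intro sum_nonneg) (auto simp: jumpP_nonneg)

lemma jump_cdf_le_1: "jump_cdf x k \<le> 1"
proof -
  have "jump_cdf x k = (\<Sum>j<Suc k. jumpP G x (enum_state j))"
    unfolding jump_cdf_def by (simp add: lessThan_Suc_atMost)
  also have "\<dots> \<le> 1"
    using sum_le_suminf[OF sums_summable[OF sums_jumpP], of "{..<Suc k}"] jumpP_nonneg
      sums_unique[OF sums_jumpP] by auto
  finally show ?thesis .
qed

lemma jump_cdf_exceeds: "u < 1 \<Longrightarrow> \<exists>k. u < jump_cdf x k"
proof -
  assume u: "u < 1"
  have "(\<lambda>n. \<Sum>j<n. jumpP G x (enum_state j)) \<longlonglongrightarrow> 1"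
    using sums_jumpP by (simp add: sums_def)
  from order_tendstoD(1)[OF this u] obtain n where "u < (\<Sum>j<n. jumpP G x (enum_state j))"
    by (auto simp: eventually_sequentially)
  also have "\<dots> \<le> jump_cdf x n"
    unfolding jump_cdf_def by (intro sum_mono2) (auto simp: jumpP_nonneg)
  finally show ?thesis by blast
qed

lemma jumpP_enum_state:
  "jumpP G x (enum_state m) = jump_cdf x m - (if m = 0 then 0 else jump_cdf x (m - 1))"
  by (cases m) (auto simp: jump_cdf_def)

lemma next_state_eq_Least: "next_state G x u = enum_state (LEAST k. u < jump_cdf x k)"
  unfolding next_state_def jump_cdf_def ..

lemma Least_jump_cdf_eq_iff:
  assumes u: "u < 1"
  shows "(LEAST k. u < jump_cdf x k) = m \<longleftrightarrow>
    u < jump_cdf x m \<and> (m = 0 \<or> jump_cdf x (m - 1) \<le> u)"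
proof
  obtain k where k: "u < jump_cdf x k" using jump_cdf_exceeds[OF u] by blast
  assume L: "(LEAST k. u < jump_cdf x k) = m"
  have "u < jump_cdf x m" using LeastI[of "\<lambda>k. u < jump_cdf x k", OF k] L by simp
  moreover have "m = 0 \<or> jump_cdf x (m - 1) \<le> u"
    using not_less_Least[of "m - 1" "\<lambda>k. u < jump_cdf x k"] L by (cases m) auto
  ultimately show "u < jump_cdf x m \<and> (m = 0 \<or> jump_cdf x (m - 1) \<le> u)" by blast
next
  assume A: "u < jump_cdf x m \<and> (m = 0 \<or> jump_cdf x (m - 1) \<le> u)"
  show "(LEAST k. u < jump_cdf x k) = m"
  proof (rule Least_equality)
    show "u < jump_cdf x m" using A by blast
    fix k assume k: "u < jump_cdf x k"
    show "m \<le> k"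
    proof (rule ccontr)
      assume "\<not> m \<le> k"
      then have "jump_cdf x k \<le> jump_cdf x (m - 1)" by (intro jump_cdf_mono) simp
      then show False using A k \<open>\<not> m \<le> k\<close> by auto
    qed
  qed
qed

lemma measurable_next_state [measurable]: "next_state G x \<in> borel \<rightarrow>\<^sub>M count_space UNIV"
proof -
  have "(\<lambda>u. LEAST k. u < jump_cdf x k) \<in> borel \<rightarrow>\<^sub>M count_space UNIV" by measurable
  then show ?thesis
    unfolding next_state_eq_Least[abs_def]
    by (rule measurable_compose) (rule measurable_count_space)
qed

lemma measurable_next_state_unif01 [measurable]:
  "next_state G x \<in> unif01 \<rightarrow>\<^sub>M count_space UNIV"
  using measurable_next_state by (simp add: measurable_cong_sets[OF sets_unif01 refl])

lemma emeasure_next_state: "emeasure unif01 {u. next_state G x u = z} = ennreal (jumpP G x z)"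
proof -
  obtain m where z: "z = enum_state m" using bij_enum_state by (metis bij_pointE)
  define lo where "lo = (if m = 0 then 0 else jump_cdf x (m - 1))"
  define hi where "hi = jump_cdf x m"
  have lohi: "0 \<le> lo" "lo \<le> hi"
    using jump_cdf_nonneg jump_cdf_mono by (auto simp: lo_def hi_def)
  have iff: "next_state G x u = z \<longleftrightarrow> lo \<le> u \<and> u < hi" if "0 < u" "u < 1" for u
  proof -
    have "next_state G x u = z \<longleftrightarrow> (LEAST k. u < jump_cdf x k) = m"
      unfolding next_state_eq_Least z using bij_enum_state by (simp add: bij_def inj_eq)
    also have "\<dots> \<longleftrightarrow> lo \<le> u \<and> u < hi"
      using Least_jump_cdf_eq_iff[OF that(2), of x m] that(1) by (auto simp: lo_def hi_def)
    finally show ?thesis .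
  qed
  have eq: "{0<..<1} \<inter> {u. next_state G x u = z} = {0<..<1} \<inter> {lo..<hi}"
  proof (intro set_eqI)
    fix u show "u \<in> {0<..<1} \<inter> {u. next_state G x u = z} \<longleftrightarrow> u \<in> {0<..<1} \<inter> {lo..<hi}"
      using iff[of u] by auto
  qed
  moreover have "emeasure lborel ({0<..<1} \<inter> {lo..<hi}) = ennreal (hi - lo)"
    using lohi jump_cdf_le_1 by (intro emeasure_lborel_Ioo_Int_Ico) (auto simp: hi_def)
  moreover have "jumpP G x z = hi - lo" unfolding z jumpP_enum_state hi_def lo_def by simp
  ultimately show ?thesis using emeasure_unif01[of "{u. next_state G x u = z}"] eq by simp
qed

lemma nn_integral_next_state:
  assumes [measurable]: "g \<in> borel_measurable (count_space UNIV)"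
  shows "(\<integral>\<^sup>+u. g (next_state G x u) \<partial>unif01) = jump_expect x g"
proof -
  have "(\<integral>\<^sup>+u. g (next_state G x u) \<partial>unif01)
      = (\<integral>\<^sup>+u. (\<integral>\<^sup>+y. g y * indicator {u. next_state G x u = y} u \<partial>count_space UNIV) \<partial>unif01)"
  proof (intro nn_integral_cong)
    fix u
    have "(\<integral>\<^sup>+y. g y * indicator {u. next_state G x u = y} u \<partial>count_space UNIV)
        = (\<integral>\<^sup>+y. g y * indicator {next_state G x u} y \<partial>count_space UNIV)"
      by (intro nn_integral_cong) (auto split: split_indicator)
    then show "g (next_state G x u)
        = (\<integral>\<^sup>+y. g y * indicator {u. next_state G x u = y} u \<partial>count_space UNIV)"
      by simp
  qed
  also have "\<dots> = (\<integral>\<^sup>+y. (\<integral>\<^sup>+u. g y * indicator {u. next_state G x u = y} u \<partial>unif01) \<partial>count_space UNIV)"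
    by (rule nn_integral_count_space_nn_integral) auto
  also have "\<dots> = (\<integral>\<^sup>+y. g y * emeasure unif01 {u. next_state G x u = y} \<partial>count_space UNIV)"
    by (intro nn_integral_cong nn_integral_cmult_indicator) measurable
  finally show ?thesis by (simp add: emeasure_next_state mult.commute)
qed

definition step :: "'a \<Rightarrow> (real \<times> real) stream \<Rightarrow> 'a" where
  "step x \<omega> = next_state G x (fst (shd \<omega>))"

lemma measurable_step [measurable]: "step x \<in> Omega \<rightarrow>\<^sub>M count_space UNIV"
  unfolding Omega_def step_def[abs_def] by measurable

lemma measurable_shift:
  assumes "\<And>y. F y \<in> Omega \<rightarrow>\<^sub>M N"
  shows "(\<lambda>\<omega>. F (step x \<omega>) (stl \<omega>)) \<in> Omega \<rightarrow>\<^sub>M N"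
proof (rule measurable_compose_countable[where f="\<lambda>y \<omega>. F y (stl \<omega>)"])
  fix y show "(\<lambda>\<omega>. F y (stl \<omega>)) \<in> Omega \<rightarrow>\<^sub>M N"
    using measurable_compose[OF measurable_stl_Omega assms[of y]] by simp
qed (rule measurable_step)

lemma jump_chain_Suc_step: "jump_chain G x \<omega> (Suc n) = jump_chain G (step x \<omega>) (stl \<omega>) n"
  by (induction n) (simp_all add: step_def)

lemma holding_time_Suc_step: "holding_time G x \<omega> (Suc n) = holding_time G (step x \<omega>) (stl \<omega>) n"
  unfolding holding_time_def jump_chain_Suc_step by simp

lemma holding_time_0: "holding_time G x \<omega> 0 = - ln (snd (shd \<omega>)) / gam G x"
  unfolding holding_time_def by simp

lemma measurable_holding_time_0 [measurable]:
  "(\<lambda>\<omega>. holding_time G y \<omega> 0) \<in> borel_measurable Omega"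
  unfolding holding_time_0 Omega_def by measurable

lemma measurable_jump_chain [measurable]:
  "(\<lambda>\<omega>. jump_chain G y \<omega> n) \<in> Omega \<rightarrow>\<^sub>M count_space UNIV"
proof (induction n arbitrary: y)
  case (Suc n)
  then show ?case unfolding jump_chain_Suc_step by (rule measurable_shift)
qed simp

lemma nn_integral_shift:
  assumes F: "\<And>y. F y \<in> borel_measurable Omega"
  shows "(\<integral>\<^sup>+\<omega>. F (step x \<omega>) (stl \<omega>) \<partial>Omega) = jump_expect x (\<lambda>y. \<integral>\<^sup>+\<omega>. F y \<omega> \<partial>Omega)"
proof -
  interpret M: prob_space "unif01 \<Otimes>\<^sub>M unif01" by (rule prob_space_unif01_pair)
  interpret U: prob_space unif01 by (rule prob_space_unif01)
  interpret PS: pair_prob_space unif01 unif01 ..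
  define g where "g y = (\<integral>\<^sup>+\<omega>. F y \<omega> \<partial>Omega)" for y
  have [measurable]: "(\<lambda>p. g (next_state G x (fst p))) \<in> borel_measurable (unif01 \<Otimes>\<^sub>M unif01)"
    by (rule measurable_compose[OF measurable_fst measurable_compose[OF measurable_next_state_unif01]])
       simp
  have "(\<integral>\<^sup>+\<omega>. F (step x \<omega>) (stl \<omega>) \<partial>Omega)
      = (\<integral>\<^sup>+p. (\<integral>\<^sup>+\<omega>. F (step x (p ## \<omega>)) (stl (p ## \<omega>)) \<partial>Omega) \<partial>(unif01 \<Otimes>\<^sub>M unif01))"
    using M.nn_integral_stream_space[OF measurable_shift[OF F, where x=x, unfolded Omega_def]]
    unfolding Omega_def .
  also have "\<dots> = (\<integral>\<^sup>+p. g (next_state G x (fst p)) \<partial>(unif01 \<Otimes>\<^sub>M unif01))"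
    by (simp add: step_def g_def)
  also have "\<dots> = (\<integral>\<^sup>+u. (\<integral>\<^sup>+v. g (next_state G x u) \<partial>unif01) \<partial>unif01)"
    by (subst U.nn_integral_fst[symmetric]) simp_all
  also have "\<dots> = jump_expect x g"
    using U.emeasure_space_1 by (simp add: nn_integral_next_state)
  finally show ?thesis by (simp add: g_def)
qed

lemma nn_integral_holding_time_0:
  "(\<integral>\<^sup>+\<omega>. ennreal (holding_time G x \<omega> 0) \<partial>Omega) = ennreal (1 / gam G x)"
proof -
  interpret M: prob_space "unif01 \<Otimes>\<^sub>M unif01" by (rule prob_space_unif01_pair)
  interpret U: prob_space unif01 by (rule prob_space_unif01)
  interpret PS: pair_prob_space unif01 unif01 ..
  have "(\<integral>\<^sup>+\<omega>. ennreal (holding_time G x \<omega> 0) \<partial>Omega)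
     = (\<integral>\<^sup>+p. (\<integral>\<^sup>+\<omega>. ennreal (- ln (snd (shd (p ## \<omega>))) / gam G x) \<partial>Omega) \<partial>(unif01 \<Otimes>\<^sub>M unif01))"
    unfolding holding_time_0 Omega_def by (rule M.nn_integral_stream_space) measurable
  also have "\<dots> = (\<integral>\<^sup>+v. (\<integral>\<^sup>+u. ennreal (- ln v / gam G x) \<partial>unif01) \<partial>unif01)"
    by (subst PS.nn_integral_snd[symmetric]) simp_all
  also have "\<dots> = (\<integral>\<^sup>+v. ennreal (- ln v / gam G x) * indicator {0<..<1} v \<partial>lborel)"
    using U.emeasure_space_1 unfolding unif01_def
    by (subst nn_integral_uniform_measure) (auto simp: divide_ennreal_def)
  also have "\<dots> = (\<integral>\<^sup>+v. ennreal (1 / gam G x) * (ennreal (- ln v) * indicator {0<..<1} v) \<partial>lborel)"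
    using gam_pos[of x]
    by (intro nn_integral_cong) (auto simp: ennreal_mult'[symmetric] split: split_indicator)
  also have "\<dots> = ennreal (1 / gam G x)"
    by (simp add: nn_integral_cmult nn_integral_minus_ln_unit_interval)
  finally show ?thesis .
qed

section \<open>The chain stopped at a set\<close>

primrec stopped_state :: "'a set \<Rightarrow> nat \<Rightarrow> 'a \<Rightarrow> (real \<times> real) stream \<Rightarrow> 'a" where
  "stopped_state S 0 y \<omega> = y"
| "stopped_state S (Suc n) y \<omega> =
     (if y \<in> S then y else stopped_state S n (step y \<omega>) (stl \<omega>))"

primrec stopped_time :: "'a set \<Rightarrow> nat \<Rightarrow> 'a \<Rightarrow> (real \<times> real) stream \<Rightarrow> ennreal" where
  "stopped_time S 0 y \<omega> = 0"
| "stopped_time S (Suc n) y \<omega> =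
     (if y \<in> S then 0 else ennreal (holding_time G y \<omega> 0) + stopped_time S n (step y \<omega>) (stl \<omega>))"

definition visits :: "'a set \<Rightarrow> 'a \<Rightarrow> (real \<times> real) stream \<Rightarrow> bool" where
  "visits A y \<omega> \<longleftrightarrow> (\<exists>n. jump_chain G y \<omega> n \<in> A)"

definition tau :: "'a set \<Rightarrow> 'a \<Rightarrow> (real \<times> real) stream \<Rightarrow> ennreal" where
  "tau A y \<omega> = (if visits A y \<omega> then (SUP n. stopped_time A n y \<omega>) else \<infinity>)"

lemma stopped_state_0 [simp]: "stopped_state S 0 y = (\<lambda>_. y)"
  by (rule ext) simp

lemma stopped_time_0 [simp]: "stopped_time S 0 y = (\<lambda>_. 0)"
  by (rule ext) simp

lemma measurable_stopped_state [measurable]: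
  "stopped_state S n y \<in> Omega \<rightarrow>\<^sub>M count_space UNIV"
proof (induction n arbitrary: y)
  case (Suc n)
  have "(\<lambda>\<omega>. stopped_state S n (step y \<omega>) (stl \<omega>)) \<in> Omega \<rightarrow>\<^sub>M count_space UNIV"
    by (rule measurable_shift) (rule Suc)
  then show ?case by (simp add: fun_eq_iff)
qed simp

lemma measurable_stopped_time [measurable]: "stopped_time S n y \<in> borel_measurable Omega"
proof (induction n arbitrary: y)
  case (Suc n)
  have "(\<lambda>\<omega>. stopped_time S n (step y \<omega>) (stl \<omega>)) \<in> borel_measurable Omega"
    by (rule measurable_shift) (rule Suc)
  then show ?case by (simp add: fun_eq_iff)
qed simp

lemma measurable_visits [measurable]: "Measurable.pred Omega (visits A y)"
  unfolding visits_def[abs_def] by measurable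

lemma measurable_tau [measurable]: "tau A y \<in> borel_measurable Omega"
  unfolding tau_def[abs_def] by measurable

lemma visits_step: "visits A y \<omega> \<longleftrightarrow> y \<in> A \<or> visits A (step y \<omega>) (stl \<omega>)"
proof
  assume "visits A y \<omega>"
  then obtain n where n: "jump_chain G y \<omega> n \<in> A" unfolding visits_def by blast
  then show "y \<in> A \<or> visits A (step y \<omega>) (stl \<omega>)"
    unfolding visits_def by (cases n) (auto simp only: jump_chain_Suc_step jump_chain.simps(1))
next
  assume "y \<in> A \<or> visits A (step y \<omega>) (stl \<omega>)"
  then show "visits A y \<omega>"
    unfolding visits_def by (metis jump_chain.simps(1) jump_chain_Suc_step)
qed

lemma stopped_state_in: "y \<in> S \<Longrightarrow> stopped_state S n y \<omega> = y"
  by (cases n) simp_all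

lemma stopped_time_mono_Suc: "stopped_time S n y \<omega> \<le> stopped_time S (Suc n) y \<omega>"
  by (induction n arbitrary: y \<omega>) (simp_all add: add_left_mono)

lemma incseq_stopped_time: "incseq (\<lambda>n. stopped_time S n y \<omega>)"
  by (rule incseq_SucI) (rule stopped_time_mono_Suc)

lemma tau_in: "y \<in> A \<Longrightarrow> tau A y \<omega> = 0"
proof -
  assume y: "y \<in> A"
  then have "stopped_time A n y \<omega> = 0" for n by (cases n) simp_all
  moreover have "visits A y \<omega>" using visits_step[of A y \<omega>] y by blast
  ultimately show ?thesis by (simp add: tau_def)
qed

lemma tau_step:
  assumes y: "y \<notin> A"
  shows "tau A y \<omega> = ennreal (holding_time G y \<omega> 0) + tau A (step y \<omega>) (stl \<omega>)"
proof (cases "visits A y \<omega>")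
  case False
  then show ?thesis using visits_step[of A y \<omega>] y by (simp add: tau_def)
next
  case True
  then have visits_next: "visits A (step y \<omega>) (stl \<omega>)" using visits_step[of A y \<omega>] y by simp
  have "(SUP n. stopped_time A n y \<omega>) = (SUP n. stopped_time A (Suc n) y \<omega>)"
    using SUP_Suc_incseq[OF incseq_stopped_time] by simp
  also have "\<dots> = (SUP n. ennreal (holding_time G y \<omega> 0) + stopped_time A n (step y \<omega>) (stl \<omega>))"
    using y by simp
  also have "\<dots> = ennreal (holding_time G y \<omega> 0) + (SUP n. stopped_time A n (step y \<omega>) (stl \<omega>))"
    by (rule ennreal_SUP_add_right[symmetric]) simp
  finally show ?thesis using True visits_next by (simp add: tau_def)
qed

lemma stopped_time_eq_sum:
  "stopped_time A n y \<omega> =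
     (\<Sum>k<n. if \<forall>j\<le>k. jump_chain G y \<omega> j \<notin> A then ennreal (holding_time G y \<omega> k) else 0)"
proof (induction n arbitrary: y \<omega>)
  case (Suc n)
  have all_le_Suc: "(\<forall>j\<le>Suc k. P j) \<longleftrightarrow> P 0 \<and> (\<forall>j\<le>k. P (Suc j))" for P k
    by (simp only: less_Suc_eq_le[symmetric] All_less_Suc2)
  show ?case
  proof (cases "y \<in> A")
    case True
    then show ?thesis by (auto intro!: sum.neutral)
  next
    case False
    have "(\<Sum>k<Suc n. if \<forall>j\<le>k. jump_chain G y \<omega> j \<notin> A then ennreal (holding_time G y \<omega> k) else 0)
      = ennreal (holding_time G y \<omega> 0) +
        (\<Sum>k<n. if \<forall>j\<le>k. jump_chain G (step y \<omega>) (stl \<omega>) j \<notin> A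
                then ennreal (holding_time G (step y \<omega>) (stl \<omega>) k) else 0)"
      unfolding sum.lessThan_Suc_shift holding_time_Suc_step using False
      by (simp add: all_le_Suc jump_chain_Suc_step del: jump_chain.simps(2))
    then show ?thesis using False Suc[of "step y \<omega>" "stl \<omega>"] by simp
  qed
qed simp

text \<open>On a valid sample all holding times are finite and positive, so the jump times increase
  strictly and ctmc is determined by the jump chain; almost every sample is valid.\<close>
definition valid_sample :: "(real \<times> real) stream \<Rightarrow> bool" where
  "valid_sample \<omega> \<longleftrightarrow> (\<forall>n. snd (\<omega> !! n) \<in> {0<..<1})"

lemma AE_valid_sample: "AE \<omega> in Omega. valid_sample \<omega>"
proof -
  interpret M: prob_space "unif01 \<Otimes>\<^sub>M unif01" by (rule prob_space_unif01_pair)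
  interpret U: prob_space unif01 by (rule prob_space_unif01)
  interpret PS: pair_prob_space unif01 unif01 ..
  have "AE v in unif01. v \<in> {0<..<1}"
    unfolding unif01_def by (rule AE_uniform_measureI) auto
  then have "AE p in unif01 \<Otimes>\<^sub>M unif01. snd p \<in> {0<..<1}"
    by (intro PS.AE_pair_measure) simp_all
  then have "AE \<omega> in stream_space (unif01 \<Otimes>\<^sub>M unif01). stream_all (\<lambda>p. snd p \<in> {0<..<1}) \<omega>"
    by (intro M.AE_stream_all) auto
  then show ?thesis unfolding Omega_def valid_sample_def stream_all_def by simp
qed

lemma holding_time_pos: "valid_sample \<omega> \<Longrightarrow> 0 < holding_time G y \<omega> n"
  unfolding valid_sample_def holding_time_def using gam_pos
  by (auto intro!: divide_neg_pos ln_less_zero)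

lemma strict_mono_jump_time: "valid_sample \<omega> \<Longrightarrow> strict_mono (jump_time G y \<omega>)"
  by (intro strict_mono_Suc_iff[THEN iffD2]) (simp add: jump_time_def holding_time_pos)

lemma ctmc_eq_Some_iff:
  assumes "valid_sample \<omega>"
  shows "ctmc G y \<omega> t = Some z \<longleftrightarrow>
    (\<exists>n. jump_time G y \<omega> n \<le> t \<and> t < jump_time G y \<omega> (Suc n) \<and> z = jump_chain G y \<omega> n)"
proof -
  define J where "J = jump_time G y \<omega>"
  have mono: "strict_mono J" unfolding J_def using assms by (rule strict_mono_jump_time)
  have unique: "n = m" if "J n \<le> t" "t < J (Suc n)" "J m \<le> t" "t < J (Suc m)" for n m
  proof (rule ccontr)
    assume "n \<noteq> m"
    then have "Suc n \<le> m \<or> Suc m \<le> n" by auto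
    then show False using that strict_mono_less_eq[OF mono] by (meson leD order_le_less_trans)
  qed
  have "(THE n. J n \<le> t \<and> t < J (Suc n)) = n" if "J n \<le> t" "t < J (Suc n)" for n
    using that unique by (intro the_equality) auto
  then show ?thesis unfolding ctmc_def J_def[symmetric] by auto
qed

lemma tau_eq_jump_time:
  assumes valid: "valid_sample \<omega>" and "visits A y \<omega>"
  shows "tau A y \<omega> = ennreal (jump_time G y \<omega> (LEAST n. jump_chain G y \<omega> n \<in> A))"
proof -
  define N where "N = (LEAST n. jump_chain G y \<omega> n \<in> A)"
  have N_in: "jump_chain G y \<omega> N \<in> A"
    using \<open>visits A y \<omega>\<close> unfolding visits_def N_def by (metis LeastI)
  have "(\<forall>j\<le>k. jump_chain G y \<omega> j \<notin> A) \<longleftrightarrow> k < N" for k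
  proof
    assume "\<forall>j\<le>k. jump_chain G y \<omega> j \<notin> A"
    then show "k < N" using N_in not_less by blast
  next
    assume "k < N"
    then show "\<forall>j\<le>k. jump_chain G y \<omega> j \<notin> A"
      using not_less_Least[of _ "\<lambda>n. jump_chain G y \<omega> n \<in> A"] unfolding N_def by auto
  qed
  then have "stopped_time A n y \<omega> = (\<Sum>k\<in>{..<n} \<inter> {..<N}. ennreal (holding_time G y \<omega> k))" for n
    unfolding stopped_time_eq_sum by (simp add: sum.inter_restrict)
  then have "(SUP n. stopped_time A n y \<omega>) = (\<Sum>k<N. ennreal (holding_time G y \<omega> k))"
    by (intro antisym SUP_least SUP_upper2[of N]) (auto intro: sum_mono2)
  also have "\<dots> = ennreal (jump_time G y \<omega> N)"
    using holding_time_pos[OF valid] by (simp add: jump_time_def less_imp_le)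
  finally show ?thesis using \<open>visits A y \<omega>\<close> by (simp add: tau_def N_def)
qed

lemma hitting_time_eq_tau:
  assumes valid: "valid_sample \<omega>"
  shows "hitting_time G A y \<omega> = tau A y \<omega>"
proof -
  define J where "J = jump_time G y \<omega>"
  have mono: "strict_mono J" unfolding J_def using valid by (rule strict_mono_jump_time)
  define T where "T = {t. 0 \<le> t \<and> (\<exists>z\<in>A. ctmc G y \<omega> t = Some z)}"
  have T_iff: "t \<in> T \<longleftrightarrow> 0 \<le> t \<and> (\<exists>n. J n \<le> t \<and> t < J (Suc n) \<and> jump_chain G y \<omega> n \<in> A)" for t
    unfolding T_def ctmc_eq_Some_iff[OF valid] J_def by auto
  have hitting: "hitting_time G A y \<omega> = (INF t\<in>T. ennreal t)"
    by (simp add: hitting_time_def T_def)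
  show ?thesis
  proof (cases "visits A y \<omega>")
    case False
    then have "T = {}" by (auto simp: T_iff visits_def)
    then show ?thesis using False by (simp add: hitting tau_def)
  next
    case True
    define N where "N = (LEAST n. jump_chain G y \<omega> n \<in> A)"
    have N_in: "jump_chain G y \<omega> N \<in> A"
      using True unfolding visits_def N_def by (metis LeastI)
    have "J 0 = 0" by (simp add: J_def jump_time_def)
    then have "J N \<in> T"
      unfolding T_iff using N_in strict_mono_less_eq[OF mono, of 0 N] strict_monoD[OF mono, of N "Suc N"]
      by auto
    moreover have "J N \<le> t" if "t \<in> T" for t
    proof -
      from that obtain n where n: "J n \<le> t" "jump_chain G y \<omega> n \<in> A" by (auto simp: T_iff)
      have "N \<le> n" unfolding N_def by (intro Least_le) (rule n(2))
      then show ?thesis using n(1) strict_mono_less_eq[OF mono] by (meson order_trans)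
    qed
    ultimately have "(INF t\<in>T. ennreal t) = ennreal (J N)"
      by (intro antisym INF_lower INF_greatest ennreal_leI) auto
    then show ?thesis using hitting tau_eq_jump_time[OF valid True] by (simp add: J_def N_def)
  qed
qed

lemma exp_hitting_time_eq: "exp_hitting_time G A y = (\<integral>\<^sup>+\<omega>. tau A y \<omega> \<partial>Omega)"
  unfolding exp_hitting_time_def
  by (rule nn_integral_cong_AE) (use AE_valid_sample in \<open>auto elim!: eventually_mono simp: hitting_time_eq_tau\<close>)

lemma nn_integral_stopped_state_Suc:
  "y \<notin> S \<Longrightarrow> (\<integral>\<^sup>+\<omega>. \<phi> (stopped_state S (Suc n) y \<omega>) \<partial>Omega)
     = jump_expect y (\<lambda>z. \<integral>\<^sup>+\<omega>. \<phi> (stopped_state S n z \<omega>) \<partial>Omega)"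
  using nn_integral_shift[of "\<lambda>z \<omega>. \<phi> (stopped_state S n z \<omega>)" y] by simp

lemma nn_integral_stopped_time_Suc:
  assumes "y \<notin> S"
  shows "(\<integral>\<^sup>+\<omega>. stopped_time S (Suc n) y \<omega> \<partial>Omega)
     = ennreal (1 / gam G y) + jump_expect y (\<lambda>z. \<integral>\<^sup>+\<omega>. stopped_time S n z \<omega> \<partial>Omega)"
  using assms
  by (simp add: nn_integral_add measurable_shift nn_integral_holding_time_0 nn_integral_shift)

lemma nn_integral_tau_step:
  assumes "y \<notin> A"
  shows "(\<integral>\<^sup>+\<omega>. tau A y \<omega> \<partial>Omega)
     = ennreal (1 / gam G y) + jump_expect y (\<lambda>z. \<integral>\<^sup>+\<omega>. tau A z \<omega> \<partial>Omega)"
  using assms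
  by (simp add: tau_step nn_integral_add measurable_shift nn_integral_holding_time_0 nn_integral_shift)

section \<open>Recurrence and Foster's criterion\<close>

definition visit_prob :: "'a set \<Rightarrow> 'a \<Rightarrow> ennreal" where
  "visit_prob A y = emeasure Omega {\<omega>. visits A y \<omega>}"

lemma sets_visits [measurable]: "{\<omega>. visits A y \<omega>} \<in> sets Omega"
  using measurable_visits[of A y] by (simp add: pred_def)

lemma visit_prob_le_1: "visit_prob A y \<le> 1"
  unfolding visit_prob_def using prob_space.emeasure_le_1[OF prob_space_Omega] by simp

lemma visit_prob_in:
  assumes "y \<in> A"
  shows "visit_prob A y = 1"
proof -
  have "{\<omega>. visits A y \<omega>} = UNIV" using visits_step[of A y] assms by blast
  then show ?thesis by (simp add: visit_prob_def)
qed

lemma emeasure_visits_shift: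
  "emeasure Omega {\<omega>. visits A (step y \<omega>) (stl \<omega>)} = jump_expect y (visit_prob A)"
proof -
  have "emeasure Omega {\<omega>. visits A (step y \<omega>) (stl \<omega>)}
      = (\<integral>\<^sup>+\<omega>. indicator {\<omega>. visits A (step y \<omega>) (stl \<omega>)} \<omega> \<partial>Omega)"
  proof (rule nn_integral_indicator[symmetric])
    have "Measurable.pred Omega (\<lambda>\<omega>. visits A (step y \<omega>) (stl \<omega>))"
      by (rule measurable_shift) (rule measurable_visits)
    then show "{\<omega>. visits A (step y \<omega>) (stl \<omega>)} \<in> sets Omega" by (simp add: pred_def)
  qed
  also have "\<dots> = (\<integral>\<^sup>+\<omega>. (\<lambda>z. indicator {\<omega>. visits A z \<omega>}) (step y \<omega>) (stl \<omega>) \<partial>Omega)"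
    by (intro nn_integral_cong) (simp split: split_indicator)
  also have "\<dots> = jump_expect y (\<lambda>z. \<integral>\<^sup>+\<omega>. indicator {\<omega>. visits A z \<omega>} \<omega> \<partial>Omega)"
    by (rule nn_integral_shift) simp
  finally show ?thesis by (simp add: visit_prob_def)
qed

lemma visit_prob_step:
  assumes "y \<notin> A"
  shows "visit_prob A y = jump_expect y (visit_prob A)"
proof -
  have "{\<omega>. visits A y \<omega>} = {\<omega>. visits A (step y \<omega>) (stl \<omega>)}"
    using visits_step[of A y] assms by blast
  then show ?thesis using emeasure_visits_shift[of A y] by (simp add: visit_prob_def)
qed

lemma jump_expect_visit_prob_return:
  assumes "jump_recurrent G"
  shows "jump_expect x (visit_prob {x}) = 1"
proof -
  have "{\<omega>. \<exists>n>0. jump_chain G x \<omega> n = x} = {\<omega>. visits {x} (step x \<omega>) (stl \<omega>)}"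
    unfolding visits_def by (metis jump_chain_Suc_step gr0_implies_Suc zero_less_Suc singletonD singletonI)
  moreover have "emeasure Omega {\<omega>. \<exists>n>0. jump_chain G x \<omega> n = x} = 1"
    using assms by (simp add: jump_recurrent_def)
  ultimately show ?thesis using emeasure_visits_shift[of "{x}" x] by simp
qed

text \<open>Induction along a path from y to x of positive jump probabilities: at each state u of
  the path the jump average of visit_prob {y} is 1 (by recurrence if u = y), which forces
  visit_prob {y} = 1 at the next state.\<close>
lemma visit_prob_singleton_eq_1:
  assumes irr: "jump_irreducible G" and rec: "jump_recurrent G"
  shows "visit_prob {y} x = 1"
proof -
  have "(\<lambda>u v. 0 < jumpP G u v)\<^sup>*\<^sup>* y x" using irr by (simp add: jump_irreducible_def)
  then show ?thesis
  proof (induction rule: rtranclp_induct)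
    case (step u v)
    have "jump_expect u (visit_prob {y}) = 1"
      using jump_expect_visit_prob_return[OF rec, of y] visit_prob_step[of u "{y}"] step.IH
      by (cases "u = y") auto
    then show ?case by (rule jump_expect_eq_1_D[OF _ visit_prob_le_1 step.hyps(2)])
  qed (simp add: visit_prob_in)
qed

lemma AE_visits:
  assumes irr: "jump_irreducible G" and rec: "jump_recurrent G" and "A \<noteq> {}"
  shows "AE \<omega> in Omega. visits A x \<omega>"
proof -
  interpret O: prob_space Omega by (rule prob_space_Omega)
  obtain y where y: "y \<in> A" using assms(3) by blast
  have "AE \<omega> in Omega. \<omega> \<in> {\<omega>. visits {y} x \<omega>}"
    using visit_prob_singleton_eq_1[OF irr rec, of y x]
    by (intro O.AE_prob_1) (simp_all add: visit_prob_def O.emeasure_eq_measure)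
  then show ?thesis
    by (rule eventually_mono) (use y in \<open>auto simp: visits_def\<close>)
qed

lemma nn_integral_tau_eq_SUP:
  assumes "AE \<omega> in Omega. visits A x \<omega>"
  shows "(\<integral>\<^sup>+\<omega>. tau A x \<omega> \<partial>Omega) = (SUP n. \<integral>\<^sup>+\<omega>. stopped_time A n x \<omega> \<partial>Omega)"
proof -
  have "(\<integral>\<^sup>+\<omega>. tau A x \<omega> \<partial>Omega) = (\<integral>\<^sup>+\<omega>. (SUP n. stopped_time A n x \<omega>) \<partial>Omega)"
    by (rule nn_integral_cong_AE) (use assms in \<open>auto elim!: eventually_mono simp: tau_def\<close>)
  also have "\<dots> = (SUP n. \<integral>\<^sup>+\<omega>. stopped_time A n x \<omega> \<partial>Omega)"
    by (rule nn_integral_monotone_convergence_SUP)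
       (auto intro!: incseq_SucI le_funI stopped_time_mono_Suc)
  finally show ?thesis .
qed

lemma nn_integral_stopped_time_le_supersolution:
  assumes V: "\<And>z. z \<notin> A \<Longrightarrow>
    ennreal (1 / gam G z) + jump_expect z (\<lambda>v. if v \<in> A then 0 else V v) \<le> V z"
  shows "(\<integral>\<^sup>+\<omega>. stopped_time A n z \<omega> \<partial>Omega) \<le> (if z \<in> A then 0 else V z)"
proof (induction n arbitrary: z)
  case (Suc n)
  show ?case
  proof (cases "z \<in> A")
    case False
    have "(\<integral>\<^sup>+\<omega>. stopped_time A (Suc n) z \<omega> \<partial>Omega)
       = ennreal (1 / gam G z) + jump_expect z (\<lambda>v. \<integral>\<^sup>+\<omega>. stopped_time A n v \<omega> \<partial>Omega)"
      using False by (rule nn_integral_stopped_time_Suc)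
    also have "\<dots> \<le> ennreal (1 / gam G z) + jump_expect z (\<lambda>v. if v \<in> A then 0 else V v)"
      by (intro add_left_mono nn_integral_mono mult_left_mono Suc.IH) auto
    also have "\<dots> \<le> V z" using V[OF False] .
    finally show ?thesis using False by simp
  qed simp
qed simp

lemma exp_hitting_time_le_lyapunov:
  assumes irr: "jump_irreducible G" and rec: "jump_recurrent G" and "A \<noteq> {}"
    and V: "in_Dom_plus G V" and drift: "\<And>z. z \<notin> A \<Longrightarrow> gen_apply G V z \<le> -1"
    and x: "x \<notin> A"
  shows "exp_hitting_time G A x \<le> ennreal (V x)"
proof -
  have V0: "0 \<le> V v" for v using V by (simp add: in_Dom_plus_def)
  have "ennreal (1 / gam G z) + jump_expect z (\<lambda>v. if v \<in> A then 0 else ennreal (V v)) \<le> ennreal (V z)"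
    if z: "z \<notin> A" for z
  proof -
    define W where "W v = (if v \<in> A then 0 else V v)" for v
    have W0: "0 \<le> W v" and WV: "W v \<le> V v" for v using V0 by (simp_all add: W_def)
    have summable: "(\<lambda>v. G z v * W v) summable_on -{z}"
      using G_nonneg W0 WV
      by (intro summable_on_comparison_test[OF in_Dom_plus_summable[OF V]]) (auto intro: mult_left_mono)
    then have "jump_expect z (\<lambda>v. if v \<in> A then 0 else ennreal (V v))
        = ennreal (off_diag_sum z W / gam G z)"
      by (subst jump_expect_ennreal[OF W0, symmetric]) (auto simp: W_def intro!: nn_integral_cong)
    moreover have "off_diag_sum z W \<le> off_diag_sum z V"
      using WV by (intro off_diag_sum_mono summable in_Dom_plus_summable[OF V])
    then have "1 / gam G z + off_diag_sum z W / gam G z \<le> V z"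
      using drift[OF z] gam_pos[of z]
      by (simp add: gen_apply_eq pos_divide_le_eq add_divide_distrib[symmetric] algebra_simps)
    moreover have "0 \<le> off_diag_sum z W / gam G z"
      using gam_pos[of z] off_diag_sum_nonneg[of W z, OF W0] by simp
    ultimately show ?thesis
      using gam_pos[of z] by (simp add: ennreal_plus[symmetric] ennreal_leI del: ennreal_plus)
  qed
  note bound = nn_integral_stopped_time_le_supersolution[of A "\<lambda>v. ennreal (V v)", OF this]
  have "exp_hitting_time G A x = (SUP n. \<integral>\<^sup>+\<omega>. stopped_time A n x \<omega> \<partial>Omega)"
    unfolding exp_hitting_time_eq using AE_visits[OF irr rec \<open>A \<noteq> {}\<close>] by (rule nn_integral_tau_eq_SUP)
  also have "\<dots> \<le> ennreal (V x)"
    using bound[of _ x] x by (intro SUP_least) simp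
  finally show ?thesis .
qed

section \<open>Bounded Lyapunov functions and bounded hitting times\<close>

lemma
  assumes C: "\<And>y. y \<notin> A \<Longrightarrow> exp_hitting_time G A y \<le> ennreal C" and "0 \<le> C"
  defines "h \<equiv> \<lambda>y. enn2real (exp_hitting_time G A y)"
  shows enn2real_exp_hitting_time_le: "h y \<le> C"
    and gen_apply_exp_hitting_time: "x \<notin> A \<Longrightarrow> gen_apply G h x = -1"
proof -
  have bounded: "exp_hitting_time G A y \<le> ennreal C" for y
    using C by (cases "y \<in> A") (simp_all add: exp_hitting_time_eq tau_in)
  then have eq: "exp_hitting_time G A y = ennreal (h y)" for y
    unfolding h_def by (metis ennreal_enn2real ennreal_less_top le_less_trans)
  have h0: "0 \<le> h y" for y by (simp add: h_def)
  show hC: "h y \<le> C" for y using bounded[of y] \<open>0 \<le> C\<close> by (simp add: eq)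
  assume x: "x \<notin> A"
  have summable: "(\<lambda>y. G x y * h y) summable_on -{x}"
    by (rule summable_on_off_diag_bounded[OF h0 hC])
  have "ennreal (h x) = ennreal (1 / gam G x) + jump_expect x (\<lambda>y. ennreal (h y))"
    using nn_integral_tau_step[OF x] by (simp add: eq exp_hitting_time_eq[symmetric])
  also have "\<dots> = ennreal (1 / gam G x + off_diag_sum x h / gam G x)"
    using gam_pos[of x] off_diag_sum_nonneg[of h x, OF h0]
    by (simp add: jump_expect_ennreal[OF h0 summable] ennreal_plus[symmetric] del: ennreal_plus)
  finally have "h x = 1 / gam G x + off_diag_sum x h / gam G x"
    using h0[of x] gam_pos[of x] off_diag_sum_nonneg[of h x, OF h0] by (simp del: ennreal_plus)
  then show "gen_apply G h x = -1" using gam_pos[of x] by (simp add: gen_apply_eq field_simps)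
qed

lemma gen_apply_indicator_plus_exp_hitting_time:
  assumes C: "\<And>y. y \<notin> A \<Longrightarrow> exp_hitting_time G A y \<le> ennreal C" and "0 \<le> C" and x: "x \<notin> A"
  shows "gen_apply G (\<lambda>y. (if y \<in> A then 0 else 1) + enn2real (exp_hitting_time G A y)) x \<le> -1"
proof -
  define h where "h y = enn2real (exp_hitting_time G A y)" for y
  have "(\<lambda>y. G x y * (if y \<in> A then 0 else 1)) summable_on -{x}"
    by (rule summable_on_off_diag_bounded[where c=1]) auto
  moreover have "(\<lambda>y. G x y * h y) summable_on -{x}"
    unfolding h_def using C \<open>0 \<le> C\<close>
    by (intro summable_on_off_diag_bounded[where c=C] enn2real_exp_hitting_time_le) simp_all
  ultimately have "gen_apply G (\<lambda>y. 1 * (if y \<in> A then 0 else 1) + 1 * h y) x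
      = 1 * gen_apply G (\<lambda>y. if y \<in> A then 0 else 1) x + 1 * gen_apply G h x"
    by (rule gen_apply_linear)
  then show ?thesis
    using gen_apply_indicator_nonpos[OF x] gen_apply_exp_hitting_time[OF C \<open>0 \<le> C\<close> x]
    by (simp add: h_def[abs_def])
qed

lemma bounded_hitting_times_imp_lyapunov:
  assumes ii: "\<forall>A. finite A \<and> A \<noteq> {} \<longrightarrow> (\<exists>C>0. \<forall>x. x \<notin> A \<longrightarrow> exp_hitting_time G A x \<le> ennreal C)"
  shows "\<exists>f b a \<epsilon>. in_Dom_plus G f \<and> bdd_above (range f) \<and> b = (SUP x. f x) \<and>
         0 < a \<and> a < b \<and> finite {x. f x \<le> a} \<and> 0 < \<epsilon> \<and>
         (\<forall>x. x \<notin> {x. f x \<le> a} \<longrightarrow> gen_apply G f x \<le> - \<epsilon>)"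
proof -
  obtain x0 :: 'a where True by blast
  obtain C where "0 < C" and C: "\<And>x. x \<notin> {x0} \<Longrightarrow> exp_hitting_time G {x0} x \<le> ennreal C"
    using ii[rule_format, of "{x0}"] by auto
  define f where "f y = (if y \<in> {x0} then 0 else 1) + enn2real (exp_hitting_time G {x0} y)" for y
  have f0: "0 \<le> f y" and fC: "f y \<le> 1 + C" for y
    using enn2real_exp_hitting_time_le[OF C, of y] \<open>0 < C\<close> by (auto simp: f_def)
  have f_x0: "f x0 = 0" by (simp add: f_def exp_hitting_time_eq tau_in)
  have f_ge_1: "x \<noteq> x0 \<Longrightarrow> 1 \<le> f x" for x by (simp add: f_def)
  have Dom: "in_Dom_plus G f"
    unfolding in_Dom_plus_def in_Dom_def using f0 summable_on_off_diag_bounded[OF f0 fC] by simp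
  have bdd: "bdd_above (range f)" using fC by (auto intro!: bdd_aboveI)
  obtain x1 :: 'a where "x1 \<noteq> x0" using infinite_states by (metis finite.simps UNIV_eq_I singletonI)
  then have "1 \<le> f x1" by (rule f_ge_1)
  then have "1 \<le> (SUP x. f x)" using cSUP_upper[OF UNIV_I bdd, of x1] by linarith
  moreover have "{x. f x \<le> 1/2} \<subseteq> {x0}" using f_ge_1 by force
  moreover have "gen_apply G f x \<le> -1" if "x \<notin> {x. f x \<le> 1/2}" for x
  proof -
    have x: "x \<notin> {x0}" using that f_x0 by auto
    show ?thesis unfolding f_def[abs_def]
      by (rule gen_apply_indicator_plus_exp_hitting_time[OF _ less_imp_le[OF \<open>0 < C\<close>] x]) (rule C)
  qed
  ultimately show ?thesis
    using Dom bdd finite_subset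
    by (intro exI[of _ f] exI[of _ "SUP x. f x"] exI[of _ "1/2"] exI[of _ 1]) auto
qed

text \<open>reach_prob A j z is the probability that the jump chain started at z visits A within
  j jumps, computed by first-step analysis.\<close>
primrec reach_prob :: "'a set \<Rightarrow> nat \<Rightarrow> 'a \<Rightarrow> real" where
  "reach_prob A 0 z = (if z \<in> A then 1 else 0)"
| "reach_prob A (Suc j) z = (if z \<in> A then 1 else off_diag_sum z (reach_prob A j) / gam G z)"

lemma reach_prob_bounds: "0 \<le> reach_prob A j z \<and> reach_prob A j z \<le> 1"
proof (induction j arbitrary: z)
  case (Suc j)
  have "off_diag_sum z (reach_prob A j) \<le> off_diag_sum z (\<lambda>_. 1)"
    using Suc by (intro off_diag_sum_mono summable_on_off_diag_bounded[where c=1]) auto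
  then show ?case
    using Suc gam_pos[of z] off_diag_sum_nonneg[of "reach_prob A j" z] off_diag_sum_1[of z]
    by simp
qed simp

lemma reach_prob_nonneg: "0 \<le> reach_prob A j z"
  and reach_prob_le_1: "reach_prob A j z \<le> 1"
  using reach_prob_bounds by auto

lemma summable_reach_prob: "(\<lambda>v. G z v * reach_prob A j v) summable_on -{z}"
  by (rule summable_on_off_diag_bounded[OF reach_prob_nonneg reach_prob_le_1])

lemma reach_prob_mono_Suc: "reach_prob A j z \<le> reach_prob A (Suc j) z"
proof (induction j arbitrary: z)
  case 0
  show ?case using reach_prob_nonneg[of A "Suc 0" z] by (cases "z \<in> A") auto
next
  case (Suc j)
  have "off_diag_sum z (reach_prob A j) \<le> off_diag_sum z (reach_prob A (Suc j))"
    using Suc by (intro off_diag_sum_mono summable_reach_prob)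
  then show ?case using gam_pos[of z] by (simp add: divide_right_mono)
qed

lemma reach_prob_mono: "j \<le> k \<Longrightarrow> reach_prob A j z \<le> reach_prob A k z"
  using lift_Suc_mono_le[of "\<lambda>j. reach_prob A j z"] reach_prob_mono_Suc by blast

lemma reach_prob_pos:
  assumes irr: "jump_irreducible G" and y: "y \<in> A"
  shows "\<exists>j. 0 < reach_prob A j z"
proof -
  have "(\<lambda>u v. 0 < jumpP G u v)\<^sup>*\<^sup>* z y" using irr by (simp add: jump_irreducible_def)
  then show ?thesis
  proof (induction rule: converse_rtranclp_induct)
    case base
    show ?case using y by (intro exI[of _ 0]) simp
  next
    case (step z w)
    then obtain j where j: "0 < reach_prob A j w" by blast
    show ?case
    proof (cases "z \<in> A")
      case False
      have "w \<noteq> z" using step.hyps(1) by auto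
      then have "0 < G z w" using step.hyps(1) gam_pos[of z] by (auto simp: jumpP_def zero_less_divide_iff)
      then have "0 < G z w * reach_prob A j w" using j by simp
      also have "\<dots> = (\<Sum>\<^sub>\<infinity>v\<in>{w}. G z v * reach_prob A j v)" by simp
      also have "\<dots> \<le> off_diag_sum z (reach_prob A j)"
        using \<open>w \<noteq> z\<close> G_nonneg reach_prob_nonneg
        by (intro infsum_mono2 summable_reach_prob) (auto intro!: mult_nonneg_nonneg)
      finally show ?thesis using False gam_pos[of z] by (intro exI[of _ "Suc j"]) simp
    qed (intro exI[of _ 0], simp)
  qed
qed

lemma reach_prob_uniformly_pos:
  assumes irr: "jump_irreducible G" and "A \<noteq> {}" and "finite F"
  obtains m where "\<And>z. z \<in> F \<Longrightarrow> 0 < reach_prob A m z"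
proof -
  obtain y where "y \<in> A" using \<open>A \<noteq> {}\<close> by blast
  then have "\<forall>z. \<exists>j. 0 < reach_prob A j z" using reach_prob_pos[OF irr] by blast
  then obtain j where j: "\<And>z. 0 < reach_prob A (j z) z" by metis
  have "0 < reach_prob A (Max (j ` F)) z" if "z \<in> F" for z
    using j[of z] reach_prob_mono[of "j z" "Max (j ` F)" A z] \<open>finite F\<close> that by simp
  then show ?thesis using that by blast
qed

text \<open>Expected number of jumps before visiting A, truncated at m.\<close>
definition truncated_jump_count :: "'a set \<Rightarrow> nat \<Rightarrow> 'a \<Rightarrow> real" where
  "truncated_jump_count A m z = (\<Sum>j<m. 1 - reach_prob A j z)"

lemma truncated_jump_count_nonneg: "0 \<le> truncated_jump_count A m z"
  unfolding truncated_jump_count_def by (intro sum_nonneg) (simp add: reach_prob_le_1)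

lemma truncated_jump_count_le: "truncated_jump_count A m z \<le> m"
proof -
  have "truncated_jump_count A m z \<le> (\<Sum>j<m. 1)"
    unfolding truncated_jump_count_def by (intro sum_mono) (simp add: reach_prob_nonneg)
  then show ?thesis by simp
qed

lemma gen_apply_truncated_jump_count:
  assumes z: "z \<notin> A"
  shows "gen_apply G (truncated_jump_count A m) z = - gam G z * reach_prob A m z"
proof -
  have summable: "(\<lambda>v. G z v * (1 - reach_prob A j v)) summable_on -{z}" for j
    using reach_prob_le_1 reach_prob_nonneg by (intro summable_on_off_diag_bounded[where c=1]) auto
  have step: "off_diag_sum z (\<lambda>v. 1 - reach_prob A j v) = gam G z * (1 - reach_prob A (Suc j) z)" for j
    using infsum_diff[OF summable_on_cmult_left[OF G_summable, of z 1] summable_reach_prob] z gam_pos[of z]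
    by (simp add: right_diff_distrib gam_def)
  have telescope: "(\<Sum>j<m. 1 - reach_prob A (Suc j) z) = truncated_jump_count A m z - reach_prob A m z"
  proof -
    have "(\<Sum>j<Suc m. 1 - reach_prob A j z) = (1 - reach_prob A 0 z) + (\<Sum>j<m. 1 - reach_prob A (Suc j) z)"
      by (rule sum.lessThan_Suc_shift)
    moreover have "(\<Sum>j<Suc m. 1 - reach_prob A j z) = truncated_jump_count A m z + (1 - reach_prob A m z)"
      by (simp add: truncated_jump_count_def)
    ultimately show ?thesis using z by simp
  qed
  have "off_diag_sum z (truncated_jump_count A m) = (\<Sum>j<m. off_diag_sum z (\<lambda>v. 1 - reach_prob A j v))"
    unfolding truncated_jump_count_def sum_distrib_left by (rule infsum_sum) (simp_all add: summable)
  also have "\<dots> = gam G z * (truncated_jump_count A m z - reach_prob A m z)"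
    by (simp add: step telescope sum_distrib_left[symmetric] del: reach_prob.simps)
  finally show ?thesis by (simp add: gen_apply_eq algebra_simps)
qed

lemma gen_apply_add_truncated_jump_count:
  assumes f: "in_Dom_plus G f" and z: "z \<notin> A"
  shows "gen_apply G (\<lambda>y. (1 / \<epsilon>) * f y + L * truncated_jump_count A m y) z
    = gen_apply G f z / \<epsilon> - L * (gam G z * reach_prob A m z)"
proof -
  have "(\<lambda>y. G z y * truncated_jump_count A m y) summable_on -{z}"
    using truncated_jump_count_nonneg truncated_jump_count_le by (rule summable_on_off_diag_bounded)
  from gen_apply_linear[OF in_Dom_plus_summable[OF f] this, where a="1 / \<epsilon>" and b=L]
  show ?thesis by (simp add: gen_apply_truncated_jump_count[OF z])
qed

lemma reach_prob_dominates:
  fixes c :: "'a \<Rightarrow> real"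
  assumes irr: "jump_irreducible G" and "A \<noteq> {}" and "finite F"
  shows "\<exists>m. \<exists>L\<ge>0. \<forall>z\<in>F. c z \<le> L * (gam G z * reach_prob A m z)"
proof -
  obtain m where "\<And>z. z \<in> F \<Longrightarrow> 0 < reach_prob A m z"
    using reach_prob_uniformly_pos[OF irr \<open>A \<noteq> {}\<close> \<open>finite F\<close>] by blast
  then have "0 < gam G z * reach_prob A m z" if "z \<in> F" for z using that gam_pos[of z] by simp
  then have "\<exists>L\<ge>0. \<forall>z\<in>F. c z \<le> L * (gam G z * reach_prob A m z)"
    by (rule finite_bounded_by_positive_multiple[OF \<open>finite F\<close>])
  then show ?thesis by blast
qed

lemma bounded_lyapunov_imp_bounded_hitting_times:
  assumes irr: "jump_irreducible G" and rec: "jump_recurrent G" and "A \<noteq> {}"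
    and V: "in_Dom_plus G V" and drift: "\<And>z. z \<notin> A \<Longrightarrow> gen_apply G V z \<le> -1"
    and bounded: "\<And>x. V x \<le> B"
  shows "\<exists>C>0. \<forall>x. x \<notin> A \<longrightarrow> exp_hitting_time G A x \<le> ennreal C"
proof (intro exI conjI allI impI)
  have "0 \<le> V undefined" using V by (simp add: in_Dom_plus_def)
  then show "0 < B + 1" using bounded[of undefined] by linarith
  fix x assume "x \<notin> A"
  have "exp_hitting_time G A x \<le> ennreal (V x)"
    by (rule exp_hitting_time_le_lyapunov[OF irr rec \<open>A \<noteq> {}\<close> V _ \<open>x \<notin> A\<close>]) (rule drift)
  also have "\<dots> \<le> ennreal (B + 1)" using bounded[of x] by (intro ennreal_leI) simp
  finally show "exp_hitting_time G A x \<le> ennreal (B + 1)" .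
qed

lemma lyapunov_imp_bounded_hitting_times:
  assumes irr: "jump_irreducible G" and rec: "jump_recurrent G"
    and f: "in_Dom_plus G f" and bdd: "bdd_above (range f)" and fin: "finite {x. f x \<le> a}"
    and "0 < \<epsilon>" and drift: "\<And>x. x \<notin> {x. f x \<le> a} \<Longrightarrow> gen_apply G f x \<le> - \<epsilon>"
    and "A \<noteq> {}"
  shows "\<exists>C>0. \<forall>x. x \<notin> A \<longrightarrow> exp_hitting_time G A x \<le> ennreal C"
proof -
  define F where "F = {x. f x \<le> a} - A"
  have "finite F" using fin by (simp add: F_def)
  have "\<exists>m. \<exists>L\<ge>0. \<forall>z\<in>F. 1 + gen_apply G f z / \<epsilon> \<le> L * (gam G z * reach_prob A m z)"
    by (rule reach_prob_dominates[OF irr \<open>A \<noteq> {}\<close> \<open>finite F\<close>])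
  then obtain m L where "0 \<le> L"
    and L: "\<forall>z\<in>F. 1 + gen_apply G f z / \<epsilon> \<le> L * (gam G z * reach_prob A m z)"
    by blast
  define V where "V y = (1 / \<epsilon>) * f y + L * truncated_jump_count A m y" for y
  have V_Dom: "in_Dom_plus G V"
    unfolding V_def[abs_def] using \<open>0 < \<epsilon>\<close> \<open>0 \<le> L\<close> truncated_jump_count_nonneg truncated_jump_count_le
    by (intro in_Dom_plus_lincomb[OF f]) auto
  have drift_V: "gen_apply G V z \<le> -1" if z: "z \<notin> A" for z
  proof (cases "z \<in> F")
    case True
    then show ?thesis using L gen_apply_add_truncated_jump_count[OF f z] by (auto simp: V_def[abs_def])
  next
    case False
    then have "gen_apply G f z / \<epsilon> \<le> -1"
      using drift[of z] z \<open>0 < \<epsilon>\<close> by (simp add: F_def divide_le_eq)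
    moreover have "0 \<le> L * (gam G z * reach_prob A m z)"
      using \<open>0 \<le> L\<close> gam_pos[of z] reach_prob_nonneg by simp
    ultimately show ?thesis using gen_apply_add_truncated_jump_count[OF f z] by (simp add: V_def[abs_def])
  qed
  have bound: "V x \<le> (1 / \<epsilon>) * (SUP x. f x) + L * m" for x
  proof -
    have "(1 / \<epsilon>) * f x \<le> (1 / \<epsilon>) * (SUP x. f x)"
      using \<open>0 < \<epsilon>\<close> cSUP_upper[OF UNIV_I bdd] by (intro mult_left_mono) auto
    moreover have "L * truncated_jump_count A m x \<le> L * m"
      by (rule mult_left_mono[OF truncated_jump_count_le \<open>0 \<le> L\<close>])
    ultimately show ?thesis by (simp add: V_def)
  qed
  show ?thesis
    by (rule bounded_lyapunov_imp_bounded_hitting_times[OF irr rec \<open>A \<noteq> {}\<close> V_Dom _ bound])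
       (rule drift_V)
qed

lemma lyapunov_iff_bounded_hitting_times:
  assumes irr: "jump_irreducible G" and rec: "jump_recurrent G"
  shows "(\<exists>f b a \<epsilon>. in_Dom_plus G f \<and> bdd_above (range f) \<and> b = (SUP x. f x) \<and>
           0 < a \<and> a < b \<and> finite {x. f x \<le> a} \<and> 0 < \<epsilon> \<and>
           (\<forall>x. x \<notin> {x. f x \<le> a} \<longrightarrow> gen_apply G f x \<le> - \<epsilon>))
    \<longleftrightarrow> (\<forall>A. finite A \<and> A \<noteq> {} \<longrightarrow>
           (\<exists>C>0. \<forall>x. x \<notin> A \<longrightarrow> exp_hitting_time G A x \<le> ennreal C))"
proof
  assume "\<exists>f b a \<epsilon>. in_Dom_plus G f \<and> bdd_above (range f) \<and> b = (SUP x. f x) \<and>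
           0 < a \<and> a < b \<and> finite {x. f x \<le> a} \<and> 0 < \<epsilon> \<and>
           (\<forall>x. x \<notin> {x. f x \<le> a} \<longrightarrow> gen_apply G f x \<le> - \<epsilon>)"
  then obtain f a \<epsilon> where "in_Dom_plus G f" "bdd_above (range f)" "finite {x. f x \<le> a}" "0 < \<epsilon>"
    and "\<forall>x. x \<notin> {x. f x \<le> a} \<longrightarrow> gen_apply G f x \<le> - \<epsilon>"
    by blast
  then show "\<forall>A. finite A \<and> A \<noteq> {} \<longrightarrow> (\<exists>C>0. \<forall>x. x \<notin> A \<longrightarrow> exp_hitting_time G A x \<le> ennreal C)"
    using lyapunov_imp_bounded_hitting_times[OF irr rec] by blast
qed (rule bounded_hitting_times_imp_lyapunov)

section \<open>Unbounded Lyapunov functions and implosion\<close>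

lemma stopped_time_le_tau: "B \<subseteq> S \<Longrightarrow> stopped_time S n y \<omega> \<le> tau B y \<omega>"
proof -
  assume BS: "B \<subseteq> S"
  have "stopped_time S n y \<omega> \<le> stopped_time B n y \<omega>"
    using BS by (induction n arbitrary: y \<omega>) (auto intro: add_left_mono)
  also have "\<dots> \<le> tau B y \<omega>"
    unfolding tau_def by (auto intro: SUP_upper)
  finally show ?thesis .
qed

lemma stopped_state_notin_subset:
  "B \<subseteq> S \<Longrightarrow> stopped_state S n y \<omega> \<notin> S \<Longrightarrow> stopped_state B n y \<omega> \<notin> B"
  by (induction n arbitrary: y \<omega>) (auto split: if_splits)

lemma stopped_state_notin_Suc:
  "stopped_state B (Suc n) y \<omega> \<notin> B \<Longrightarrow> stopped_state B n y \<omega> \<notin> B"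
  by (induction n arbitrary: y \<omega>) (auto split: if_splits)

lemma jump_chain_notin_if_stopped_notin:
  "stopped_state B n y \<omega> \<notin> B \<Longrightarrow> jump_chain G y \<omega> n \<notin> B"
  by (induction n arbitrary: y \<omega>)
     (auto simp: jump_chain_Suc_step split: if_splits simp del: jump_chain.simps(2))

lemma sets_stopped_state_notin [measurable]: "{\<omega>. stopped_state B n y \<omega> \<notin> B} \<in> sets Omega"
proof -
  have "stopped_state B n y -` (-B) \<inter> space Omega \<in> sets Omega"
    by (rule measurable_sets[OF measurable_stopped_state]) simp
  then show ?thesis by (simp add: vimage_def)
qed

lemma emeasure_not_stopped_tendsto_0:
  assumes finite: "(\<integral>\<^sup>+\<omega>. tau B x \<omega> \<partial>Omega) \<noteq> \<infinity>"
  shows "(\<lambda>n. emeasure Omega {\<omega>. stopped_state B n x \<omega> \<notin> B}) \<longlonglongrightarrow> 0"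
proof -
  interpret O: prob_space Omega by (rule prob_space_Omega)
  define D where "D n = {\<omega>. stopped_state B n x \<omega> \<notin> B}" for n
  have "{\<omega>. \<not> visits B x \<omega>} = space Omega - {\<omega>. visits B x \<omega>}" by auto
  then have never: "{\<omega>. \<not> visits B x \<omega>} \<in> sets Omega"
    using sets.compl_sets[OF sets_visits, of B x] by simp
  have "emeasure Omega {\<omega>. \<not> visits B x \<omega>} = 0"
  proof (rule ccontr)
    assume "emeasure Omega {\<omega>. \<not> visits B x \<omega>} \<noteq> 0"
    moreover have "\<infinity> * emeasure Omega {\<omega>. \<not> visits B x \<omega>} \<le> (\<integral>\<^sup>+\<omega>. tau B x \<omega> \<partial>Omega)"
      unfolding nn_integral_cmult_indicator[OF never, symmetric]
      by (intro nn_integral_mono) (auto simp: tau_def split: split_indicator)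
    ultimately show False using finite by (simp add: ennreal_mult_eq_top_iff top_unique ennreal_top_mult)
  qed
  moreover have "(\<Inter>n. D n) \<subseteq> {\<omega>. \<not> visits B x \<omega>}"
    by (auto simp: D_def visits_def dest: jump_chain_notin_if_stopped_notin)
  ultimately have "emeasure Omega (\<Inter>n. D n) = 0"
    using emeasure_mono[OF _ never] by (metis le_zero_eq)
  moreover have "(\<lambda>n. emeasure Omega (D n)) \<longlonglongrightarrow> emeasure Omega (\<Inter>n. D n)"
  proof (rule Lim_emeasure_decseq)
    show "decseq D" using stopped_state_notin_Suc by (intro decseq_SucI) (auto simp: D_def)
  qed (auto simp: D_def O.emeasure_finite)
  ultimately show ?thesis by (simp add: D_def)
qed

lemma stopped_value_lower_bound:
  assumes f: "in_Dom_plus G f" and "0 \<le> \<epsilon>"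
    and drift: "\<And>y. y \<notin> S \<Longrightarrow> - \<epsilon> \<le> gen_apply G f y"
  shows "ennreal (f y) \<le> (\<integral>\<^sup>+\<omega>. ennreal (f (stopped_state S n y \<omega>)) \<partial>Omega)
    + ennreal \<epsilon> * (\<integral>\<^sup>+\<omega>. stopped_time S n y \<omega> \<partial>Omega)"
proof (induction n arbitrary: y)
  case (Suc n)
  show ?case
  proof (cases "y \<in> S")
    case False
    have f0: "0 \<le> f z" for z using f by (simp add: in_Dom_plus_def)
    have "f y \<le> \<epsilon> * (1 / gam G y) + off_diag_sum y f / gam G y"
      using drift[OF False] gam_pos[of y] by (simp add: gen_apply_eq field_simps)
    then have "ennreal (f y) \<le> ennreal \<epsilon> * ennreal (1 / gam G y) + jump_expect y (\<lambda>z. ennreal (f z))"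
      using \<open>0 \<le> \<epsilon>\<close> gam_pos[of y] off_diag_sum_nonneg[of f y, OF f0]
      by (simp add: jump_expect_ennreal[OF f0 in_Dom_plus_summable[OF f]] ennreal_mult'[symmetric]
          ennreal_plus[symmetric] ennreal_leI del: ennreal_plus)
    also have "\<dots> \<le> ennreal \<epsilon> * ennreal (1 / gam G y) + jump_expect y (\<lambda>z.
        (\<integral>\<^sup>+\<omega>. ennreal (f (stopped_state S n z \<omega>)) \<partial>Omega) + ennreal \<epsilon> * (\<integral>\<^sup>+\<omega>. stopped_time S n z \<omega> \<partial>Omega))"
      by (intro add_left_mono nn_integral_mono mult_left_mono Suc.IH) auto
    also have "\<dots> = (\<integral>\<^sup>+\<omega>. ennreal (f (stopped_state S (Suc n) y \<omega>)) \<partial>Omega)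
        + ennreal \<epsilon> * (\<integral>\<^sup>+\<omega>. stopped_time S (Suc n) y \<omega> \<partial>Omega)"
      unfolding nn_integral_stopped_state_Suc[OF False, where \<phi>="\<lambda>z. ennreal (f z)"]
        nn_integral_stopped_time_Suc[OF False]
      by (simp add: distrib_left nn_integral_add nn_integral_cmult[symmetric] mult.left_commute add_ac)
    finally show ?thesis .
  qed (simp add: stopped_state_in)
qed simp

lemma stopped_value_upper_bound:
  assumes g: "in_Dom_plus G g" and "0 \<le> \<kappa>"
    and drift: "\<And>y. y \<notin> S \<Longrightarrow> gen_apply G g y \<le> \<kappa>"
  shows "(\<integral>\<^sup>+\<omega>. ennreal (g (stopped_state S n y \<omega>)) \<partial>Omega)
    \<le> ennreal (g y) + ennreal \<kappa> * (\<integral>\<^sup>+\<omega>. stopped_time S n y \<omega> \<partial>Omega)"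
proof (induction n arbitrary: y)
  case (Suc n)
  show ?case
  proof (cases "y \<in> S")
    case False
    have g0: "0 \<le> g z" for z using g by (simp add: in_Dom_plus_def)
    have "(\<integral>\<^sup>+\<omega>. ennreal (g (stopped_state S (Suc n) y \<omega>)) \<partial>Omega)
        \<le> jump_expect y (\<lambda>z. ennreal (g z) + ennreal \<kappa> * (\<integral>\<^sup>+\<omega>. stopped_time S n z \<omega> \<partial>Omega))"
      unfolding nn_integral_stopped_state_Suc[OF False, where \<phi>="\<lambda>z. ennreal (g z)"]
      by (intro nn_integral_mono mult_left_mono Suc.IH) auto
    also have "\<dots> = jump_expect y (\<lambda>z. ennreal (g z))
        + ennreal \<kappa> * jump_expect y (\<lambda>z. \<integral>\<^sup>+\<omega>. stopped_time S n z \<omega> \<partial>Omega)"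
      by (simp add: distrib_left nn_integral_add nn_integral_cmult[symmetric] mult.left_commute)
    also have "jump_expect y (\<lambda>z. ennreal (g z)) \<le> ennreal (g y) + ennreal \<kappa> * ennreal (1 / gam G y)"
    proof -
      have "off_diag_sum y g / gam G y \<le> g y + \<kappa> * (1 / gam G y)"
        using drift[OF False] gam_pos[of y] by (simp add: gen_apply_eq field_simps)
      then show ?thesis
        using \<open>0 \<le> \<kappa>\<close> g0[of y] gam_pos[of y]
        by (simp add: jump_expect_ennreal[OF g0 in_Dom_plus_summable[OF g]] ennreal_mult'[symmetric]
            ennreal_plus[symmetric] ennreal_leI del: ennreal_plus)
    qed
    finally show ?thesis
      unfolding nn_integral_stopped_time_Suc[OF False] by (simp add: distrib_left add_ac)
  qed (simp add: stopped_state_in)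
qed simp

lemma nn_integral_stopped_state_split:
  fixes f :: "'a \<Rightarrow> real"
  assumes f0: "\<And>y. 0 \<le> f y" and "0 \<le> a" "1 \<le> M" "1 < r"
  defines "B \<equiv> {y. f y \<le> a}"
  defines "S \<equiv> B \<union> {y. M < f y}"
  shows "(\<integral>\<^sup>+\<omega>. ennreal (f (stopped_state S n x \<omega>)) \<partial>Omega)
    \<le> ennreal a + ennreal (1 / M powr (r - 1)) * (\<integral>\<^sup>+\<omega>. ennreal (f (stopped_state S n x \<omega>) powr r) \<partial>Omega)
      + ennreal M * emeasure Omega {\<omega>. stopped_state B n x \<omega> \<notin> B}"
proof -
  define D where "D = {\<omega>. stopped_state B n x \<omega> \<notin> B}"
  have "ennreal (f (stopped_state S n x \<omega>)) \<le> ennreal a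
      + ennreal (1 / M powr (r - 1)) * ennreal (f (stopped_state S n x \<omega>) powr r) + ennreal M * indicator D \<omega>"
    for \<omega>
  proof -
    define t where "t = f (stopped_state S n x \<omega>)"
    have "indicator {a<..M} t \<le> (indicator D \<omega> :: real)"
      using stopped_state_notin_subset[of B S n x \<omega>]
      by (auto simp: t_def D_def S_def B_def split: split_indicator)
    then have "t \<le> a + t powr r / M powr (r - 1) + M * indicator D \<omega>"
      using le_split_powr[OF f0[of "stopped_state S n x \<omega>"] assms(2-4)] \<open>1 \<le> M\<close>
      unfolding t_def[symmetric] by (smt (verit) mult_left_mono)
    then show ?thesis
      using \<open>0 \<le> a\<close> \<open>1 \<le> M\<close>
      by (simp add: t_def[symmetric] ennreal_mult'[symmetric] ennreal_plus[symmetric] ennreal_leI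
          divide_inverse mult.commute ennreal_indicator[symmetric] del: ennreal_plus)
  qed
  then have "(\<integral>\<^sup>+\<omega>. ennreal (f (stopped_state S n x \<omega>)) \<partial>Omega) \<le> (\<integral>\<^sup>+\<omega>. ennreal a
      + ennreal (1 / M powr (r - 1)) * ennreal (f (stopped_state S n x \<omega>) powr r) + ennreal M * indicator D \<omega> \<partial>Omega)"
    by (rule nn_integral_mono)
  also have "\<dots> = ennreal a + ennreal (1 / M powr (r - 1)) * (\<integral>\<^sup>+\<omega>. ennreal (f (stopped_state S n x \<omega>) powr r) \<partial>Omega)
      + ennreal M * emeasure Omega D"
    by (simp add: nn_integral_add nn_integral_cmult nn_integral_cmult_indicator D_def)
  finally show ?thesis by (simp add: D_def)
qed

lemma stopped_moment_bound:
  fixes M :: real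
  assumes fr: "in_Dom_plus G (\<lambda>x. f x powr r)" and f0: "\<And>y. 0 \<le> f y" and "0 \<le> c" "1 < r"
    and moment: "\<And>y. y \<notin> B \<Longrightarrow> gen_apply G (\<lambda>x. f x powr r) y \<le> c * f y powr (r - 1)"
  defines "S \<equiv> B \<union> {y. M < f y}"
  shows "(\<integral>\<^sup>+\<omega>. ennreal (f (stopped_state S n x \<omega>) powr r) \<partial>Omega)
    \<le> ennreal (f x powr r) + ennreal (c * M powr (r - 1)) * (\<integral>\<^sup>+\<omega>. stopped_time S n x \<omega> \<partial>Omega)"
proof (rule stopped_value_upper_bound[OF fr])
  show "0 \<le> c * M powr (r - 1)" using \<open>0 \<le> c\<close> by simp
  fix y assume "y \<notin> S"
  then have "f y powr (r - 1) \<le> M powr (r - 1)"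
    using f0[of y] \<open>1 < r\<close> by (intro powr_mono2) (auto simp: S_def)
  then have "c * f y powr (r - 1) \<le> c * M powr (r - 1)" using \<open>0 \<le> c\<close> by (rule mult_left_mono)
  then show "gen_apply G (\<lambda>x. f x powr r) y \<le> c * M powr (r - 1)"
    using moment[of y] \<open>y \<notin> S\<close> by (simp add: S_def)
qed

lemma lyapunov_stopped_bound:
  fixes M :: real
  assumes f: "in_Dom_plus G f" and fr: "in_Dom_plus G (\<lambda>x. f x powr r)"
    and "0 \<le> a" "0 \<le> c" "0 \<le> \<epsilon>" "1 < r" "1 \<le> M"
    and drift: "\<And>y. y \<notin> {x. f x \<le> a} \<Longrightarrow> - \<epsilon> \<le> gen_apply G f y"
    and moment: "\<And>y. y \<notin> {x. f x \<le> a} \<Longrightarrow> gen_apply G (\<lambda>x. f x powr r) y \<le> c * f y powr (r - 1)"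
  defines "B \<equiv> {x. f x \<le> a}" and "S \<equiv> {x. f x \<le> a} \<union> {y. M < f y}"
  assumes time: "(\<integral>\<^sup>+\<omega>. stopped_time S n x \<omega> \<partial>Omega) \<le> ennreal K"
  shows "ennreal (f x) \<le> ennreal a
    + ennreal (1 / M powr (r - 1)) * (ennreal (f x powr r) + ennreal (c * M powr (r - 1)) * ennreal K)
    + ennreal M * emeasure Omega {\<omega>. stopped_state B n x \<omega> \<notin> B} + ennreal \<epsilon> * ennreal K"
proof -
  have f0: "0 \<le> f y" for y using f by (simp add: in_Dom_plus_def)
  have "(\<integral>\<^sup>+\<omega>. ennreal (f (stopped_state S n x \<omega>) powr r) \<partial>Omega)
      \<le> ennreal (f x powr r) + ennreal (c * M powr (r - 1)) * (\<integral>\<^sup>+\<omega>. stopped_time S n x \<omega> \<partial>Omega)"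
    unfolding S_def using moment
    by (rule stopped_moment_bound[where f=f, OF fr f0 \<open>0 \<le> c\<close> \<open>1 < r\<close>])
  also have "\<dots> \<le> ennreal (f x powr r) + ennreal (c * M powr (r - 1)) * ennreal K"
    by (intro add_left_mono mult_left_mono time) simp
  finally have moment_bound: "(\<integral>\<^sup>+\<omega>. ennreal (f (stopped_state S n x \<omega>) powr r) \<partial>Omega)
      \<le> ennreal (f x powr r) + ennreal (c * M powr (r - 1)) * ennreal K" .
  have "ennreal (f x) \<le> (\<integral>\<^sup>+\<omega>. ennreal (f (stopped_state S n x \<omega>)) \<partial>Omega)
      + ennreal \<epsilon> * (\<integral>\<^sup>+\<omega>. stopped_time S n x \<omega> \<partial>Omega)"
    using drift by (intro stopped_value_lower_bound[OF f \<open>0 \<le> \<epsilon>\<close>]) (simp add: S_def)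
  also have "\<dots> \<le> ennreal a
      + ennreal (1 / M powr (r - 1)) * (\<integral>\<^sup>+\<omega>. ennreal (f (stopped_state S n x \<omega>) powr r) \<partial>Omega)
      + ennreal M * emeasure Omega {\<omega>. stopped_state B n x \<omega> \<notin> B} + ennreal \<epsilon> * ennreal K"
    using nn_integral_stopped_state_split[where f=f, OF f0 \<open>0 \<le> a\<close> \<open>1 \<le> M\<close> \<open>1 < r\<close>, where n=n and x=x]
      time
    unfolding S_def B_def by (intro add_mono mult_left_mono) simp_all
  also have "\<dots> \<le> ennreal a
      + ennreal (1 / M powr (r - 1)) * (ennreal (f x powr r) + ennreal (c * M powr (r - 1)) * ennreal K)
      + ennreal M * emeasure Omega {\<omega>. stopped_state B n x \<omega> \<notin> B} + ennreal \<epsilon> * ennreal K"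
    using moment_bound by (intro add_mono mult_left_mono order_refl) simp_all
  finally show ?thesis .
qed

lemma lyapunov_growth_bound:
  assumes f: "in_Dom_plus G f" and fr: "in_Dom_plus G (\<lambda>x. f x powr r)"
    and "0 \<le> a" "0 \<le> c" "0 \<le> \<epsilon>" "1 < r" "1 \<le> M" "0 \<le> K"
    and drift: "\<And>y. y \<notin> {x. f x \<le> a} \<Longrightarrow> - \<epsilon> \<le> gen_apply G f y"
    and moment: "\<And>y. y \<notin> {x. f x \<le> a} \<Longrightarrow> gen_apply G (\<lambda>x. f x powr r) y \<le> c * f y powr (r - 1)"
    and K: "exp_hitting_time G {x. f x \<le> a} x \<le> ennreal K"
  shows "f x \<le> a + f x powr r / M powr (r - 1) + (c + \<epsilon>) * K + 1"
proof -
  define B where "B = {x. f x \<le> a}"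
  define M' where "M' = M powr (r - 1)"
  have "0 < M'" using \<open>1 \<le> M\<close> by (simp add: M'_def)
  have tau: "(\<integral>\<^sup>+\<omega>. tau B x \<omega> \<partial>Omega) \<le> ennreal K"
    using K by (simp add: B_def exp_hitting_time_eq)
  have "(\<lambda>n. emeasure Omega {\<omega>. stopped_state B n x \<omega> \<notin> B}) \<longlonglongrightarrow> 0"
    using tau by (intro emeasure_not_stopped_tendsto_0) (auto simp: top_unique)
  moreover have "0 < ennreal (1 / M)" using \<open>1 \<le> M\<close> by simp
  ultimately have "eventually (\<lambda>n. emeasure Omega {\<omega>. stopped_state B n x \<omega> \<notin> B} < ennreal (1 / M)) sequentially"
    by (rule order_tendstoD(2))
  then obtain n where "\<forall>m\<ge>n. emeasure Omega {\<omega>. stopped_state B m x \<omega> \<notin> B} < ennreal (1 / M)"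
    unfolding eventually_sequentially by blast
  then have n: "emeasure Omega {\<omega>. stopped_state B n x \<omega> \<notin> B} \<le> ennreal (1 / M)"
    by (simp add: less_imp_le)
  have "(\<integral>\<^sup>+\<omega>. stopped_time (B \<union> {y. M < f y}) n x \<omega> \<partial>Omega) \<le> (\<integral>\<^sup>+\<omega>. tau B x \<omega> \<partial>Omega)"
    by (intro nn_integral_mono stopped_time_le_tau) simp
  then have "ennreal (f x) \<le> ennreal a + ennreal (1 / M') * (ennreal (f x powr r) + ennreal (c * M') * ennreal K)
      + ennreal M * emeasure Omega {\<omega>. stopped_state B n x \<omega> \<notin> B} + ennreal \<epsilon> * ennreal K"
    using tau unfolding M'_def B_def
    by (intro lyapunov_stopped_bound[OF f fr \<open>0 \<le> a\<close> \<open>0 \<le> c\<close> \<open>0 \<le> \<epsilon>\<close> \<open>1 < r\<close> \<open>1 \<le> M\<close> drift moment])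
       (auto intro: order_trans)
  also have "\<dots> \<le> ennreal a + ennreal (1 / M') * (ennreal (f x powr r) + ennreal (c * M') * ennreal K)
      + ennreal M * ennreal (1 / M) + ennreal \<epsilon> * ennreal K"
    using n by (intro add_mono mult_left_mono order_refl) simp_all
  also have "\<dots> = ennreal (a + f x powr r / M' + (c + \<epsilon>) * K) + 1"
    using \<open>0 \<le> a\<close> \<open>0 \<le> c\<close> \<open>0 \<le> \<epsilon>\<close> \<open>0 \<le> K\<close> \<open>0 < M'\<close> \<open>1 \<le> M\<close>
    by (simp add: ennreal_mult'[symmetric] ennreal_plus[symmetric] field_simps del: ennreal_plus)
  also have "\<dots> = ennreal (a + f x powr r / M' + (c + \<epsilon>) * K + 1)"
    using \<open>0 \<le> a\<close> \<open>0 \<le> c\<close> \<open>0 \<le> \<epsilon>\<close> \<open>0 \<le> K\<close> \<open>0 < M'\<close> by simp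
  finally show ?thesis
    using \<open>0 \<le> a\<close> \<open>0 \<le> c\<close> \<open>0 \<le> \<epsilon>\<close> \<open>0 \<le> K\<close> \<open>0 < M'\<close>
    by (subst (asm) ennreal_le_iff) (simp_all add: M'_def)
qed

lemma lyapunov_imp_no_implosion:
  assumes f: "in_Dom_plus G f" and f_to_infinity: "\<forall>n::nat. finite {x. f x \<le> real n}"
    and "0 < a" "0 < c" "0 < \<epsilon>" "1 < r"
    and fr: "in_Dom_plus G (\<lambda>x. f x powr r)"
    and drift: "\<forall>x. x \<notin> {x. f x \<le> a} \<longrightarrow> gen_apply G f x \<ge> - \<epsilon>"
    and moment: "\<forall>x. x \<notin> {x. f x \<le> a} \<longrightarrow> gen_apply G (\<lambda>x. f x powr r) x \<le> c * f x powr (r - 1)"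
  shows "\<not> (\<exists>K>0. \<forall>x. x \<notin> {x. f x \<le> a} \<longrightarrow> exp_hitting_time G {x. f x \<le> a} x \<le> ennreal K)"
proof
  assume "\<exists>K>0. \<forall>x. x \<notin> {x. f x \<le> a} \<longrightarrow> exp_hitting_time G {x. f x \<le> a} x \<le> ennreal K"
  then obtain K where "0 < K"
    and K: "\<And>x. x \<notin> {x. f x \<le> a} \<Longrightarrow> exp_hitting_time G {x. f x \<le> a} x \<le> ennreal K"
    by blast
  obtain x where x: "a + (c + \<epsilon>) * K + 2 < f x"
    using finite_sublevels_unbounded[OF infinite_states f_to_infinity] by blast
  have "0 \<le> f x" using f by (simp add: in_Dom_plus_def)
  have "0 \<le> (c + \<epsilon>) * K" using \<open>0 < c\<close> \<open>0 < \<epsilon>\<close> \<open>0 < K\<close> by simp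
  then have "x \<notin> {x. f x \<le> a}" using x by simp
  define M where "M = f x powr (r / (r - 1)) + 1"
  have "1 \<le> M" by (simp add: M_def)
  have "f x powr r = (f x powr (r / (r - 1))) powr (r - 1)"
    using \<open>1 < r\<close> by (simp add: powr_powr)
  also have "\<dots> \<le> M powr (r - 1)"
    using \<open>1 < r\<close> \<open>0 \<le> f x\<close> by (intro powr_mono2) (auto simp: M_def)
  finally have "f x powr r / M powr (r - 1) \<le> 1"
    using \<open>1 \<le> M\<close> by simp
  moreover have "f x \<le> a + f x powr r / M powr (r - 1) + (c + \<epsilon>) * K + 1"
    using \<open>0 < a\<close> \<open>0 < c\<close> \<open>0 < \<epsilon>\<close> \<open>1 < r\<close> \<open>1 \<le> M\<close> \<open>0 < K\<close> drift moment
      K[OF \<open>x \<notin> {x. f x \<le> a}\<close>]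
    by (intro lyapunov_growth_bound[OF f fr, of a c \<epsilon> M K]) auto
  ultimately show False using x by linarith
qed

end

theorem theorem1p6:
  fixes G :: "'a::countable \<Rightarrow> 'a \<Rightarrow> real"
  assumes inf: "infinite (UNIV :: 'a set)"
    and gen: "is_generator G"
    and irr: "jump_irreducible G"
    and rec: "jump_recurrent G"
  shows
    "((\<exists>f b a \<epsilon>. in_Dom_plus G f \<and> bdd_above (range f) \<and> b = (SUP x. f x) \<and>
         0 < a \<and> a < b \<and> finite {x. f x \<le> a} \<and> 0 < \<epsilon> \<and>
         (\<forall>x. x \<notin> {x. f x \<le> a} \<longrightarrow> gen_apply G f x \<le> - \<epsilon>))
      \<longleftrightarrow>
      (\<forall>A. finite A \<and> A \<noteq> {} \<longrightarrow>
         (\<exists>C>0. \<forall>x. x \<notin> A \<longrightarrow> exp_hitting_time G A x \<le> ennreal C)))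
     \<and>
     (\<forall>f a c \<epsilon> r.
        in_Dom_plus G f \<and> (\<forall>n::nat. finite {x. f x \<le> real n}) \<and>
        0 < a \<and> 0 < c \<and> 0 < \<epsilon> \<and> 1 < r \<and>
        in_Dom_plus G (\<lambda>x. f x powr r) \<and>
        (\<forall>x. x \<notin> {x. f x \<le> a} \<longrightarrow> gen_apply G f x \<ge> - \<epsilon>) \<and>
        (\<forall>x. x \<notin> {x. f x \<le> a} \<longrightarrow>
             gen_apply G (\<lambda>x. f x powr r) x \<le> c * f x powr (r - 1))
      \<longrightarrow> \<not> (\<exists>K>0. \<forall>x. x \<notin> {x. f x \<le> a} \<longrightarrow>
                      exp_hitting_time G {x. f x \<le> a} x \<le> ennreal K))"
proof -
  have "chain G" using gen inf by (simp add: chain_def chain_axioms_def generator_def)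
  then interpret chain G .
  show ?thesis
    by (intro conjI allI impI lyapunov_iff_bounded_hitting_times[OF irr rec])
       (elim conjE, rule lyapunov_imp_no_implosion)
qed

end
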